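(* Let $T\subset\mathbb{R}^d$ ($d\in\{2,3\}$) be a nondegenerate simplex and $k\ge1$. Every $b\in\mathcal{B}_k(T)$ can be written as $$b=\sum_{i\in\mathcal{V}}\mu_i\lambda_iS^i\ (d=2)\qquad\text{or}\qquad b=\sum_{q=0}^1\sum_{i\in\mathcal{V}}\mu_i^q\lambda_iS^i_q\ (d=3),$$ with $\mu_i,\mu_i^0,\mu_i^1\in\mathbb{P}^{k-1}(T)$. Consequently $\dim\mathcal{B}_k(T)=\frac32k(k+1)$ if $d=2$ and $\dim\mathcal{B}_k(T)=\frac86k(k+1)(k+2)$ if $d=3$.
   Context: $\mathcal{V}=\{0,\dots,d\}$; $V_i$ vertices of $T$, $F_i$ the facet opposite $V_i$, $\lambda_i$ the barycentric coordinates. $\mathbb{D}=\{M\in\mathbb{R}^{d\times d}:\operatorname{tr}M=0\}$, $\operatorname{dev}\tau=\tau-\frac{\operatorname{tr}\tau}{d}I$, $a\otimes b=ab^T$. For $d=2$: $S^i=\operatorname{dev}(\nabla\lambda_{i+1}\otimes\operatorname{curl}\lambda_{i+2})$, $\operatorname{curl}\phi=(-\partial_2\phi,\partial_1\phi)^T$, indices mod 3. For $d=3$: $S^i_0=\operatorname{dev}(\nabla\lambda_{i+1}\otimes(\nabla\lambda_{i+2}\times\nabla\lambda_{i+3}))$, $S^i_1=\operatorname{dev}(\nabla\lambda_{i+2}\otimes(\nabla\lambda_{i+3}\times\nabla\lambda_{i+1}))$, indices mod 4. For a facet with unit normal $n$, $\tau_{nt}=\tau n-(n^T\tau n)n$.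 $\mathbb{P}^k$ denotes polynomials of degree at most $k$. $\Sigma_k(T)=\{\tau\in\mathbb{P}^k(T,\mathbb{D}):\tau_{nt}|_F\in\mathbb{P}^{k-1}(F,\mathbb{R}^{d-1})\text{ for every facet }F\text{ of }T\}$ (the tangential vector field $\tau_{nt}|_F$ is identified with an $\mathbb{R}^{d-1}$-valued function), and $\mathcal{B}_k(T)=\{\tau\in\Sigma_k(T):\tau_{nt}=0\text{ on }\partial T\}$. *)

theory Defs
  imports "HOL-Analysis.Analysis" "HOL-Library.Function_Algebras"
begin

definition poly_fun :: "nat \<Rightarrow> (real^'n::finite \<Rightarrow> real) \<Rightarrow> bool" where
  "poly_fun k f \<longleftrightarrow> (\<exists>c :: ('n \<Rightarrow> nat) \<Rightarrow> real.
     f = (\<lambda>x. \<Sum>\<alpha>\<in>{\<alpha>. sum \<alpha> UNIV \<le> k}. c \<alpha> * (\<Prod>i\<in>UNIV. (x$i) ^ (\<alpha> i))))"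

definition vpoly_fun :: "nat \<Rightarrow> (real^'n::finite \<Rightarrow> real^'m::finite) \<Rightarrow> bool" where
  "vpoly_fun k f \<longleftrightarrow> (\<forall>i. poly_fun k (\<lambda>x. f x $ i))"

definition mpoly_fun :: "nat \<Rightarrow> (real^'n::finite \<Rightarrow> real^'n^'n) \<Rightarrow> bool" where
  "mpoly_fun k f \<longleftrightarrow> (\<forall>i j. poly_fun k (\<lambda>x. f x $ i $ j))"

definition nondeg_simplex :: "(nat \<Rightarrow> real^'n::finite) \<Rightarrow> bool" where
  "nondeg_simplex V \<longleftrightarrow> inj_on V {0..CARD('n)} \<and> \<not> affine_dependent (V ` {0..CARD('n)})"

definition simplex_of :: "(nat \<Rightarrow> real^'n::finite) \<Rightarrow> (real^'n) set" where
  "simplex_of V = convex hull (V ` {0..CARD('n)})"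

definition bary_coeffs :: "(nat \<Rightarrow> real^'n::finite) \<Rightarrow> nat \<Rightarrow> (real^'n) \<times> real" where
  "bary_coeffs V i = (THE p. \<forall>j\<in>{0..CARD('n)}. fst p \<bullet> V j + snd p = (if j = i then 1 else 0))"

definition bary :: "(nat \<Rightarrow> real^'n::finite) \<Rightarrow> nat \<Rightarrow> real^'n \<Rightarrow> real" where
  "bary V i x = fst (bary_coeffs V i) \<bullet> x + snd (bary_coeffs V i)"

definition bgrad :: "(nat \<Rightarrow> real^'n::finite) \<Rightarrow> nat \<Rightarrow> real^'n" where
  "bgrad V i = fst (bary_coeffs V i)"

definition facet :: "(nat \<Rightarrow> real^'n::finite) \<Rightarrow> nat \<Rightarrow> (real^'n) set" where
  "facet V i = convex hull (V ` ({0..CARD('n)} - {i}))"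

definition unit_normal :: "(nat \<Rightarrow> real^'n::finite) \<Rightarrow> nat \<Rightarrow> real^'n \<Rightarrow> bool" where
  "unit_normal V i n \<longleftrightarrow> norm n = 1 \<and>
     (\<forall>j\<in>{0..CARD('n)} - {i}. \<forall>l\<in>{0..CARD('n)} - {i}. n \<bullet> (V j - V l) = 0)"

definition tang_part :: "real^'n^'n \<Rightarrow> real^'n \<Rightarrow> real^'n::finite" where
  "tang_part \<tau> n = \<tau> *v n - (n \<bullet> (\<tau> *v n)) *\<^sub>R n"

definition outer :: "real^'n::finite \<Rightarrow> real^'n \<Rightarrow> real^'n^'n" where
  "outer a b = (\<chi> i j. a$i * b$j)"

definition dev :: "real^'n^'n \<Rightarrow> real^'n^'n::finite" where
  "dev \<tau> = \<tau> - (trace \<tau> / real CARD('n)) *\<^sub>R mat 1"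

definition Sigma_sp :: "nat \<Rightarrow> (nat \<Rightarrow> real^'n::finite) \<Rightarrow> (real^'n \<Rightarrow> real^'n^'n) set" where
  "Sigma_sp k V = {\<tau>. mpoly_fun k \<tau> \<and> (\<forall>x. trace (\<tau> x) = 0) \<and>
     (\<forall>i\<in>{0..CARD('n)}. \<forall>n. unit_normal V i n \<longrightarrow>
        (\<exists>p. vpoly_fun (k - 1) p \<and> (\<forall>x\<in>facet V i. tang_part (\<tau> x) n = p x)))}"

definition Bub_sp :: "nat \<Rightarrow> (nat \<Rightarrow> real^'n::finite) \<Rightarrow> (real^'n \<Rightarrow> real^'n^'n) set" where
  "Bub_sp k V = {\<tau>\<in>Sigma_sp k V.
     \<forall>i\<in>{0..CARD('n)}. \<forall>n. unit_normal V i n \<longrightarrow> (\<forall>x\<in>facet V i. tang_part (\<tau> x) n = 0)}"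

definition fdim :: "('a \<Rightarrow> 'b::real_vector) set \<Rightarrow> nat" where
  "fdim S = vector_space.dim (\<lambda>c f x. c *\<^sub>R f x) S"

text \<open>d = 2: curl of a linear function with gradient g is (-g_2, g_1).\<close>
definition curl2 :: "real^2 \<Rightarrow> real^2" where
  "curl2 g = vector [- (g$2), g$1]"

definition S2 :: "(nat \<Rightarrow> real^2) \<Rightarrow> nat \<Rightarrow> real^2^2" where
  "S2 V i = dev (outer (bgrad V ((i+1) mod 3)) (curl2 (bgrad V ((i+2) mod 3))))"

definition S3 :: "(nat \<Rightarrow> real^3) \<Rightarrow> nat \<Rightarrow> nat \<Rightarrow> real^3^3" where
  "S3 V q i = (if q = 0
     then dev (outer (bgrad V ((i+1) mod 4)) (cross3 (bgrad V ((i+2) mod 4)) (bgrad V ((i+3) mod 4))))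
     else dev (outer (bgrad V ((i+2) mod 4)) (cross3 (bgrad V ((i+3) mod 4)) (bgrad V ((i+1) mod 4)))))"

end

theory Submission
  imports Defs
begin

text \<open>
  Suppose the shape matrices \<open>S p\<close> (\<open>p \<in> Q\<close>) are trace-free, attached to the vertex \<open>\<iota> p\<close>
  (their tangential traces vanish on every other facet), and come with test vectors
  \<open>u p \<bottom> \<nabla>\<lambda>\<^bsub>\<iota> p\<^esub>\<close> such that the functionals \<open>\<phi>\<^sub>p N = u p \<bullet> N \<nabla>\<lambda>\<^bsub>\<iota> p\<^esub>\<close> are dual to
  the \<open>S p\<close> and, with the trace, separate matrices. For a bubble \<open>b\<close>, \<open>b n\<close> is normal on
  \<open>F\<^bsub>\<iota> p\<^esub>\<close> while \<open>u p\<close> is tangential, so the degree \<open>k\<close> polynomial \<open>\<phi>\<^sub>p b\<close> vanishes on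
  that facet and equals \<open>\<lambda>\<^bsub>\<iota> p\<^esub> \<mu>\<^sub>p \<phi>\<^sub>p (S p)\<close> with \<open>\<mu>\<^sub>p \<in> P\<^sub>k\<^sub>-\<^sub>1\<close>. Then
  \<open>b - \<Sum>\<^sub>p \<mu>\<^sub>p \<lambda>\<^bsub>\<iota> p\<^esub> S p\<close> is trace-free and killed by every \<open>\<phi>\<^sub>p\<close>, hence zero. Applying
  \<open>\<phi>\<^sub>p\<close> also shows that the \<open>\<mu>\<^sub>p\<close> are unique, so \<open>dim B\<^sub>k = |Q| dim P\<^sub>k\<^sub>-\<^sub>1\<close>.
  In the plane the tests are \<open>curl \<nabla>\<lambda>\<^sub>i\<close> (\<open>|Q| = 3\<close>), in space \<open>\<nabla>\<lambda>\<^sub>i \<times> \<nabla>\<lambda>\<^sub>i\<^sub>+\<^sub>2\<close> and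
  \<open>\<nabla>\<lambda>\<^sub>i \<times> \<nabla>\<lambda>\<^sub>i\<^sub>+\<^sub>1\<close> (\<open>|Q| = 8\<close>); they separate because a trace-free matrix having every
  \<open>\<nabla>\<lambda>\<^sub>j\<close> as an eigenvector vanishes.
\<close>


section \<open>Polynomial functions\<close>

definition monomial :: "('n::finite \<Rightarrow> nat) \<Rightarrow> real^'n \<Rightarrow> real" where
  "monomial \<alpha> x = (\<Prod>i\<in>UNIV. (x$i) ^ (\<alpha> i))"

definition multi_indices :: "nat \<Rightarrow> ('n::finite \<Rightarrow> nat) set" where
  "multi_indices k = {\<alpha>. sum \<alpha> UNIV \<le> k}"

lemma finite_multi_indices [simp]: "finite (multi_indices k :: ('n::finite \<Rightarrow> nat) set)"
proof (rule finite_subset)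
  show "multi_indices k \<subseteq> Pi\<^sub>E (UNIV::'n set) (\<lambda>_. {..k})"
    unfolding multi_indices_def PiE_UNIV_domain
  proof (clarsimp simp: Pi_def)
    fix \<alpha> :: "'n \<Rightarrow> nat" and i
    assume "sum \<alpha> UNIV \<le> k"
    moreover have "\<alpha> i \<le> sum \<alpha> UNIV" by (rule member_le_sum) auto
    ultimately show "\<alpha> i \<le> k" by simp
  qed
qed (rule finite_PiE; simp)

lemma multi_indices_mono: "k \<le> l \<Longrightarrow> multi_indices k \<subseteq> multi_indices l"
  unfolding multi_indices_def by auto

lemma poly_fun_altdef:
  "poly_fun k f \<longleftrightarrow> (\<exists>c. f = (\<lambda>x. \<Sum>\<alpha>\<in>multi_indices k. c \<alpha> * monomial \<alpha> x))"
  unfolding poly_fun_def multi_indices_def monomial_def by simp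

lemma monomial_zero [simp]: "monomial (\<lambda>_. 0) x = 1"
  unfolding monomial_def by simp

lemma monomial_add: "monomial (\<lambda>i. \<alpha> i + \<beta> i) x = monomial \<alpha> x * monomial \<beta> x"
  unfolding monomial_def by (simp add: power_add prod.distrib)

lemma poly_fun_zero: "poly_fun k (\<lambda>x. 0)"
  unfolding poly_fun_altdef by (rule exI[of _ "\<lambda>_. 0"]) simp

lemma poly_fun_add:
  assumes "poly_fun k f" "poly_fun k g"
  shows "poly_fun k (\<lambda>x. f x + g x)"
proof -
  obtain c d where "f = (\<lambda>x. \<Sum>\<alpha>\<in>multi_indices k. c \<alpha> * monomial \<alpha> x)"
    "g = (\<lambda>x. \<Sum>\<alpha>\<in>multi_indices k. d \<alpha> * monomial \<alpha> x)"
    using assms unfolding poly_fun_altdef by auto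
  then show ?thesis unfolding poly_fun_altdef
    by (auto intro!: exI[of _ "\<lambda>\<alpha>. c \<alpha> + d \<alpha>"] simp: sum.distrib distrib_right)
qed

lemma poly_fun_cmult:
  assumes "poly_fun k f"
  shows "poly_fun k (\<lambda>x. r * f x)"
proof -
  obtain c where "f = (\<lambda>x. \<Sum>\<alpha>\<in>multi_indices k. c \<alpha> * monomial \<alpha> x)"
    using assms unfolding poly_fun_altdef by auto
  then show ?thesis unfolding poly_fun_altdef
    by (auto intro!: exI[of _ "\<lambda>\<alpha>. r * c \<alpha>"] simp: sum_distrib_left mult.assoc)
qed

lemma poly_fun_sum:
  "finite S \<Longrightarrow> (\<And>i. i \<in> S \<Longrightarrow> poly_fun k (f i)) \<Longrightarrow> poly_fun k (\<lambda>x. \<Sum>i\<in>S. f i x)"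
  by (induction S rule: finite_induct) (auto intro: poly_fun_zero poly_fun_add)

lemma poly_fun_monomial:
  assumes "\<alpha> \<in> multi_indices k"
  shows "poly_fun k (monomial \<alpha>)"
proof -
  have "monomial \<alpha> x = (\<Sum>\<beta>\<in>multi_indices k. (if \<beta> = \<alpha> then 1 else 0) * monomial \<beta> x)" for x
    using assms by (simp add: if_distrib[of "\<lambda>c. c * _"] cong: if_cong)
  then show ?thesis unfolding poly_fun_altdef by (intro exI[of _ "\<lambda>\<beta>. if \<beta> = \<alpha> then 1 else 0"]) blast
qed

lemma poly_fun_mono:
  assumes "k \<le> l" "poly_fun k f"
  shows "poly_fun l f"
proof -
  obtain c where c: "f = (\<lambda>x. \<Sum>\<alpha>\<in>multi_indices k. c \<alpha> * monomial \<alpha> x)"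
    using assms(2) unfolding poly_fun_altdef by auto
  show ?thesis unfolding c
    by (intro poly_fun_sum poly_fun_cmult poly_fun_monomial finite_multi_indices)
      (use multi_indices_mono[OF assms(1)] in auto)
qed

lemma poly_fun_mult:
  assumes "poly_fun k f" "poly_fun l g"
  shows "poly_fun (k + l) (\<lambda>x. f x * g x)"
proof -
  obtain c d where
    c: "f = (\<lambda>x. \<Sum>\<alpha>\<in>multi_indices k. c \<alpha> * monomial \<alpha> x)" and
    d: "g = (\<lambda>x. \<Sum>\<beta>\<in>multi_indices l. d \<beta> * monomial \<beta> x)"
    using assms unfolding poly_fun_altdef by auto
  have prod: "(\<lambda>x. f x * g x) = (\<lambda>x. \<Sum>\<alpha>\<in>multi_indices k. \<Sum>\<beta>\<in>multi_indices l.
           (c \<alpha> * d \<beta>) * monomial (\<lambda>i. \<alpha> i + \<beta> i) x)"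
    unfolding c d by (simp add: sum_product monomial_add mult_ac)
  show ?thesis unfolding prod
    by (intro poly_fun_sum poly_fun_cmult poly_fun_monomial finite_multi_indices)
      (auto simp: multi_indices_def sum.distrib)
qed

lemma poly_fun_const: "poly_fun k (\<lambda>x::real^'n::finite. c)"
  using poly_fun_cmult[OF poly_fun_monomial[of "\<lambda>_. 0" k], of c]
  by (simp add: multi_indices_def)

lemma poly_fun_coord: "poly_fun 1 (\<lambda>x::real^'n::finite. x$i)"
proof -
  have "monomial (\<lambda>j. if j = i then 1 else 0) = (\<lambda>x::real^'n. x$i)"
    unfolding monomial_def by (simp add: if_distrib cong: if_cong)
  moreover have "(\<lambda>j::'n. if j = i then 1 else 0::nat) \<in> multi_indices 1"
    unfolding multi_indices_def by simp
  ultimately show ?thesis using poly_fun_monomial by metis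
qed

lemma poly_fun_affine: "poly_fun 1 (\<lambda>x::real^'n::finite. a \<bullet> x + c)"
  unfolding inner_vec_def inner_real_def
  by (intro poly_fun_add poly_fun_const poly_fun_sum poly_fun_cmult poly_fun_coord) simp

lemma poly_fun_power: "poly_fun k f \<Longrightarrow> poly_fun (k * m) (\<lambda>x. f x ^ m)"
proof (induction m)
  case 0
  then show ?case using poly_fun_const by simp
next
  case (Suc m)
  from poly_fun_mult[OF Suc.prems Suc.IH[OF Suc.prems]] show ?case by simp
qed

lemma poly_fun_prod:
  "finite S \<Longrightarrow> (\<And>i. i \<in> S \<Longrightarrow> poly_fun (d i) (f i)) \<Longrightarrow>
     poly_fun (\<Sum>i\<in>S. d i) (\<lambda>x. \<Prod>i\<in>S. f i x)"
proof (induction S rule: finite_induct)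
  case empty
  then show ?case using poly_fun_const by simp
next
  case (insert a S)
  from poly_fun_mult[OF insert.prems[of a] insert.IH] insert show ?case by simp
qed

lemma poly_fun_compose_affine:
  fixes p :: "real^'n::finite \<Rightarrow> real" and A :: "real^'m::finite \<Rightarrow> real^'n"
  assumes "poly_fun k p" "\<And>i. poly_fun 1 (\<lambda>t. A t $ i)"
  shows "poly_fun k (\<lambda>t. p (A t))"
proof -
  obtain c where c: "p = (\<lambda>x. \<Sum>\<alpha>\<in>multi_indices k. c \<alpha> * monomial \<alpha> x)"
    using assms(1) unfolding poly_fun_altdef by auto
  have "poly_fun k (\<lambda>t. \<Prod>i\<in>UNIV. A t $ i ^ \<alpha> i)" if "\<alpha> \<in> multi_indices k" for \<alpha>
  proof (rule poly_fun_mono)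
    show "poly_fun (\<Sum>i\<in>UNIV. 1 * \<alpha> i) (\<lambda>t. \<Prod>i\<in>UNIV. A t $ i ^ \<alpha> i)"
      by (intro poly_fun_prod poly_fun_power assms(2)) simp
  qed (use that in \<open>simp add: multi_indices_def\<close>)
  then show ?thesis unfolding c monomial_def
    by (intro poly_fun_sum finite_multi_indices poly_fun_cmult)
qed

definition vec_upd :: "real^'n \<Rightarrow> 'n \<Rightarrow> real \<Rightarrow> real^'n" where
  "vec_upd x a s = (\<chi> i. if i = a then s else x$i)"

lemma vec_upd_nth: "vec_upd x a s $ i = (if i = a then s else x$i)"
  unfolding vec_upd_def by simp

lemma monomial_vec_upd: "monomial \<alpha> (vec_upd x a s) = monomial (\<alpha>(a:=0)) x * s ^ \<alpha> a"
proof -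
  have "monomial \<alpha> (vec_upd x a s) = s ^ \<alpha> a * (\<Prod>i\<in>UNIV-{a}. (vec_upd x a s $ i) ^ \<alpha> i)"
    unfolding monomial_def by (subst prod.remove[of _ a]) (auto simp: vec_upd_nth)
  also have "(\<Prod>i\<in>UNIV-{a}. (vec_upd x a s $ i) ^ \<alpha> i) = (\<Prod>i\<in>UNIV-{a}. (x$i) ^ \<alpha> i)"
    by (rule prod.cong) (auto simp: vec_upd_nth)
  also have "\<dots> = monomial (\<alpha>(a:=0)) x"
    unfolding monomial_def by (subst (2) prod.remove[of _ a]) auto
  finally show ?thesis by simp
qed

lemma real_poly_coeffs_zero_on_interval:
  fixes b :: "nat \<Rightarrow> real"
  assumes "l < h" "\<And>s. l < s \<Longrightarrow> s < h \<Longrightarrow> (\<Sum>i\<le>n. b i * s^i) = 0" "i \<le> n"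
  shows "b i = 0"
proof (rule ccontr)
  assume "b i \<noteq> 0"
  then have "finite {s. (\<Sum>i\<le>n. b i * s^i) = 0}" using polyfun_finite_roots assms(3) by blast
  moreover have "{l<..<h} \<subseteq> {s. (\<Sum>i\<le>n. b i * s^i) = 0}" using assms(2) by auto
  ultimately show False using infinite_Ioo[OF assms(1)] finite_subset by blast
qed

lemma monomial_sum_vec_upd:
  assumes "finite A" "\<And>\<gamma>. \<gamma> \<in> A \<Longrightarrow> e \<gamma> a \<le> N"
  shows "(\<Sum>\<gamma>\<in>A. c \<gamma> * monomial (e \<gamma>) (vec_upd x a s)) =
    (\<Sum>i\<le>N. (\<Sum>\<gamma>\<in>{\<gamma>\<in>A. e \<gamma> a = i}. c \<gamma> * monomial ((e \<gamma>)(a:=0)) x) * s^i)"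
proof -
  have "(\<Sum>\<gamma>\<in>A. c \<gamma> * monomial (e \<gamma>) (vec_upd x a s)) =
      (\<Sum>\<gamma>\<in>A. c \<gamma> * monomial ((e \<gamma>)(a:=0)) x * s ^ e \<gamma> a)"
    by (simp add: monomial_vec_upd mult.assoc)
  also have "\<dots> = (\<Sum>i\<le>N. \<Sum>\<gamma>\<in>{\<gamma>\<in>A. e \<gamma> a = i}. c \<gamma> * monomial ((e \<gamma>)(a:=0)) x * s ^ e \<gamma> a)"
    by (rule sum.group[symmetric]) (use assms in auto)
  also have "\<dots> = (\<Sum>i\<le>N. (\<Sum>\<gamma>\<in>{\<gamma>\<in>A. e \<gamma> a = i}. c \<gamma> * monomial ((e \<gamma>)(a:=0)) x) * s^i)"
    unfolding sum_distrib_right by (intro sum.cong refl) auto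
  finally show ?thesis .
qed

lemma inj_on_fun_upd_level:
  assumes "inj_on e A"
  shows "inj_on (\<lambda>\<gamma>. (e \<gamma>)(a := 0)) {\<gamma>\<in>A. e \<gamma> a = m}"
proof (rule inj_onI)
  fix \<gamma> \<delta> assume \<gamma>: "\<gamma> \<in> {\<gamma>\<in>A. e \<gamma> a = m}" and \<delta>: "\<delta> \<in> {\<gamma>\<in>A. e \<gamma> a = m}"
    and eq: "(e \<gamma>)(a := 0) = (e \<delta>)(a := 0)"
  have "e \<gamma> i = e \<delta> i" for i using \<gamma> \<delta> fun_cong[OF eq, of i] by (cases "i = a") auto
  then show "\<gamma> = \<delta>" using inj_onD[OF assms, of \<gamma> \<delta>] \<gamma> \<delta> by (simp add: fun_eq_iff)
qed

text \<open>Induction on the set of variables the exponents involve. The exponents are indexed by an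
  injective map \<open>e\<close>, so that freezing a variable does not force a reindexing of the sum.\<close>
lemma monomial_coeffs_zero_on_box_supported:
  fixes e :: "'i \<Rightarrow> 'n::finite \<Rightarrow> nat"
  assumes "finite S" "box l h \<noteq> {}"
  shows "finite A \<Longrightarrow> inj_on e A \<Longrightarrow> (\<And>\<beta> i. \<beta> \<in> A \<Longrightarrow> i \<notin> S \<Longrightarrow> e \<beta> i = 0) \<Longrightarrow>
    (\<And>x. x \<in> box l h \<Longrightarrow> (\<Sum>\<beta>\<in>A. c \<beta> * monomial (e \<beta>) x) = 0) \<Longrightarrow> \<beta> \<in> A \<Longrightarrow> c \<beta> = 0"
  using assms(1)
proof (induction S arbitrary: A e \<beta> rule: finite_induct)
  case empty
  have e0: "e \<gamma> = (\<lambda>_. 0)" if "\<gamma> \<in> A" for \<gamma> using empty.prems(3)[OF that] by auto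
  have "\<gamma> = \<beta>" if "\<gamma> \<in> A" for \<gamma>
    using inj_onD[OF empty.prems(2), of \<gamma> \<beta>] e0 that empty.prems(5) by simp
  then have "A = {\<beta>}" using empty.prems(5) by blast
  moreover obtain x where "x \<in> box l h" using assms(2) by blast
  ultimately show ?case using empty.prems(4)[of x] e0 by simp
next
  case (insert a S)
  have lh: "l$a < h$a" using assms(2) interval_eq_empty_cart(1)[of l h] by (meson not_le)
  define N where "N = Max ((\<lambda>\<gamma>. e \<gamma> a) ` A)"
  have N: "\<And>\<gamma>. \<gamma> \<in> A \<Longrightarrow> e \<gamma> a \<le> N" unfolding N_def using insert.prems(1) by auto
  have level_zero: "(\<Sum>\<gamma>\<in>{\<gamma>\<in>A. e \<gamma> a = m}. c \<gamma> * monomial ((e \<gamma>)(a:=0)) x) = 0"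
    if x: "x \<in> box l h" and m: "m \<le> N" for m x
  proof (rule real_poly_coeffs_zero_on_interval[OF lh _ m])
    fix s assume "l$a < s" "s < h$a"
    then have "vec_upd x a s \<in> box l h" using x by (auto simp: mem_box_cart vec_upd_nth)
    with insert.prems(4) monomial_sum_vec_upd[of A e a N c x s, OF insert.prems(1) N]
    show "(\<Sum>i\<le>N. (\<Sum>\<gamma>\<in>{\<gamma>\<in>A. e \<gamma> a = i}. c \<gamma> * monomial ((e \<gamma>)(a:=0)) x) * s^i) = 0" by metis
  qed
  show ?case
  proof (rule insert.IH[of "{\<gamma>\<in>A. e \<gamma> a = e \<beta> a}" "\<lambda>\<gamma>. (e \<gamma>)(a:=0)"])
    show "inj_on (\<lambda>\<gamma>. (e \<gamma>)(a := 0)) {\<gamma> \<in> A. e \<gamma> a = e \<beta> a}"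
      by (rule inj_on_fun_upd_level[OF insert.prems(2)])
    show "(\<Sum>\<gamma>\<in>{\<gamma>\<in>A. e \<gamma> a = e \<beta> a}. c \<gamma> * monomial ((e \<gamma>)(a:=0)) x) = 0"
      if "x \<in> box l h" for x
      by (rule level_zero[OF that N[OF insert.prems(5)]])
  qed (use insert.prems in auto)
qed

lemma monomial_coeffs_zero_on_box:
  fixes c :: "('n::finite \<Rightarrow> nat) \<Rightarrow> real"
  assumes "finite A" "box l h \<noteq> {}" "\<And>x. x \<in> box l h \<Longrightarrow> (\<Sum>\<alpha>\<in>A. c \<alpha> * monomial \<alpha> x) = 0"
    "\<alpha> \<in> A"
  shows "c \<alpha> = 0"
  using monomial_coeffs_zero_on_box_supported[of UNIV l h A id c \<alpha>] assms by simp

lemma monomial_coeffs_unique: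
  fixes c :: "('n::finite \<Rightarrow> nat) \<Rightarrow> real"
  assumes "finite A" "\<And>x. (\<Sum>\<alpha>\<in>A. c \<alpha> * monomial \<alpha> x) = 0" "\<alpha> \<in> A"
  shows "c \<alpha> = 0"
proof -
  have "box (0::real^'n) (\<chi> i. 1) \<noteq> {}"
    using interval_eq_empty_cart(1)[of "0::real^'n" "\<chi> i. 1"] by simp
  then show ?thesis using monomial_coeffs_zero_on_box[OF assms(1) _ _ assms(3)] assms(2) by blast
qed

lemma poly_fun_zero_on_open:
  fixes p :: "real^'n::finite \<Rightarrow> real"
  assumes "poly_fun k p" "open U" "U \<noteq> {}" "\<And>x. x \<in> U \<Longrightarrow> p x = 0"
  shows "p y = 0"
proof -
  obtain c where c: "p = (\<lambda>x. \<Sum>\<alpha>\<in>multi_indices k. c \<alpha> * monomial \<alpha> x)"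
    using assms(1) unfolding poly_fun_altdef by auto
  obtain x0 where "x0 \<in> U" using assms(3) by blast
  then obtain l h where box: "box l h \<subseteq> U" "x0 \<in> box l h"
    using open_contains_box[OF assms(2)] by metis
  have "c \<alpha> = 0" if "\<alpha> \<in> multi_indices k" for \<alpha>
    by (rule monomial_coeffs_zero_on_box[OF finite_multi_indices _ _ that, of l h])
      (use box assms(4) c in auto)
  then show ?thesis unfolding c by simp
qed

lemma sum_fun_upd_UNIV:
  fixes \<alpha> :: "'n::finite \<Rightarrow> nat"
  shows "sum (\<alpha>(e:=m)) UNIV + \<alpha> e = sum \<alpha> UNIV + m"
proof -
  have "sum (\<alpha>(e:=m)) UNIV = m + sum (\<alpha>(e:=m)) (UNIV - {e})" by (subst sum.remove[of _ e]) auto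
  moreover have "sum \<alpha> UNIV = \<alpha> e + sum \<alpha> (UNIV - {e})" by (subst sum.remove[of _ e]) auto
  moreover have "sum (\<alpha>(e:=m)) (UNIV - {e}) = sum \<alpha> (UNIV - {e})" by (rule sum.cong) auto
  ultimately show ?thesis by simp
qed

lemma vec_upd_same: "vec_upd t e (t$e) = t"
  unfolding vec_upd_def by (simp add: vec_eq_iff)

lemma poly_fun_vec_upd_coord: "poly_fun 1 (\<lambda>t. vec_upd t e s $ i)"
proof (cases "i = e")
  case True then show ?thesis unfolding vec_upd_def by (simp add: poly_fun_const)
next
  case False
  have "(\<lambda>t. vec_upd t e s $ i) = (\<lambda>t. t $ i)" using False unfolding vec_upd_def by simp
  then show ?thesis using poly_fun_coord by metis
qed

lemma monomial_split_coord:
  assumes "\<alpha> e \<noteq> 0"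
  shows "monomial \<alpha> t = t$e * monomial (\<alpha>(e := \<alpha> e - 1)) t"
proof -
  have "monomial \<alpha> t = monomial (\<alpha>(e:=0)) t * (t$e) ^ (\<alpha> e)"
    using monomial_vec_upd[of \<alpha> t e "t$e"] by (simp add: vec_upd_same)
  moreover have "monomial (\<alpha>(e := \<alpha> e - 1)) t = monomial (\<alpha>(e:=0)) t * (t$e) ^ (\<alpha> e - 1)"
    using monomial_vec_upd[of "\<alpha>(e := \<alpha> e - 1)" t e "t$e"] by (simp add: vec_upd_same)
  moreover have "(t$e) ^ (\<alpha> e) = t$e * (t$e) ^ (\<alpha> e - 1)" using assms by (cases "\<alpha> e") auto
  ultimately show ?thesis by simp
qed

lemma monomial_vec_upd_zero:
  "monomial \<alpha> (vec_upd t e 0) = (if \<alpha> e = 0 then monomial \<alpha> t else 0)"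
  using monomial_vec_upd[of \<alpha> t e 0] by (simp add: fun_upd_idem)

lemma poly_fun_split_coord:
  fixes P :: "real^'n::finite \<Rightarrow> real"
  assumes "poly_fun k P"
  obtains Q where "poly_fun (k - 1) Q" "\<And>t. P t = P (vec_upd t e 0) + t$e * Q t"
proof -
  obtain c where c: "P = (\<lambda>x. \<Sum>\<alpha>\<in>multi_indices k. c \<alpha> * monomial \<alpha> x)"
    using assms unfolding poly_fun_altdef by blast
  define D where "D = multi_indices k \<inter> - {\<alpha>. \<alpha> e = 0}"
  define Q where "Q t = (\<Sum>\<alpha>\<in>D. c \<alpha> * monomial (\<alpha>(e := \<alpha> e - 1)) t)" for t
  have "poly_fun (k - 1) Q" unfolding Q_def
  proof (intro poly_fun_sum poly_fun_cmult poly_fun_monomial)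
    fix \<alpha> :: "'n \<Rightarrow> nat" assume "\<alpha> \<in> D"
    then have "sum \<alpha> UNIV \<le> k" "\<alpha> e \<noteq> 0" unfolding D_def multi_indices_def by auto
    with sum_fun_upd_UNIV[of \<alpha> e "\<alpha> e - 1"]
    show "\<alpha>(e := \<alpha> e - 1) \<in> multi_indices (k - 1)" unfolding multi_indices_def by simp
  qed (simp add: D_def)
  moreover have "P t = P (vec_upd t e 0) + t$e * Q t" for t
  proof -
    have "P t = (\<Sum>\<alpha>\<in>multi_indices k. if \<alpha> e = 0 then c \<alpha> * monomial \<alpha> t
                 else c \<alpha> * (t$e * monomial (\<alpha>(e := \<alpha> e - 1)) t))"
      unfolding c by (intro sum.cong refl) (simp add: monomial_split_coord)
    also have "\<dots> = (\<Sum>\<alpha>\<in>multi_indices k. if \<alpha> e = 0 then c \<alpha> * monomial \<alpha> t else 0) + t$e * Q t"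
      unfolding Q_def D_def by (subst (1 2) sum.If_cases) (simp_all add: sum_distrib_left mult_ac)
    also have "(\<Sum>\<alpha>\<in>multi_indices k. if \<alpha> e = 0 then c \<alpha> * monomial \<alpha> t else 0) = P (vec_upd t e 0)"
      unfolding c by (intro sum.cong refl) (simp add: monomial_vec_upd_zero)
    finally show ?thesis .
  qed
  ultimately show ?thesis using that by blast
qed


section \<open>Barycentric coordinates\<close>

lemma nondeg_simplex_affine_hull:
  fixes V :: "nat \<Rightarrow> real^'n::finite"
  assumes "nondeg_simplex V"
  shows "affine hull (V ` {0..CARD('n)}) = UNIV"
proof -
  have inj: "inj_on V {0..CARD('n)}" and ind: "\<not> affine_dependent (V ` {0..CARD('n)})"
    using assms unfolding nondeg_simplex_def by auto
  have "card (V ` {0..CARD('n)}) = CARD('n) + 1" using card_image[OF inj] by simp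
  with aff_dim_affine_independent[OF ind] have "aff_dim (V ` {0..CARD('n)}) = int CARD('n)" by simp
  then show ?thesis using aff_dim_eq_full[of "V ` {0..CARD('n)}"] by simp
qed

lemma affine_eq_zero_on_vertices:
  fixes V :: "nat \<Rightarrow> real^'n::finite"
  assumes "nondeg_simplex V" "\<And>j. j \<in> {0..CARD('n)} \<Longrightarrow> a \<bullet> V j + c = 0"
  shows "a = 0 \<and> c = 0"
proof -
  have "a \<bullet> V j = -c" if "j \<in> {0..CARD('n)}" for j using assms(2)[OF that] by linarith
  then have "V ` {0..CARD('n)} \<subseteq> {x. a \<bullet> x = -c}" by auto
  then have "affine hull (V ` {0..CARD('n)}) \<subseteq> {x. a \<bullet> x = -c}"
    by (rule hull_minimal) (rule affine_hyperplane)
  then have all: "\<And>x. a \<bullet> x = -c" using nondeg_simplex_affine_hull[OF assms(1)] by auto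
  from all[of 0] have c: "c = 0" by simp
  from all[of a] c have "a = 0" by simp
  with c show ?thesis by simp
qed

lemma nondeg_simplex_edges_independent:
  fixes V :: "nat \<Rightarrow> real^'n::finite"
  assumes "nondeg_simplex V"
  shows "independent ((\<lambda>j. V j - V 0) ` {1..CARD('n)})"
proof -
  have inj: "inj_on V {0..CARD('n)}" and ind: "\<not> affine_dependent (V ` {0..CARD('n)})"
    using assms unfolding nondeg_simplex_def by auto
  have "{0..CARD('n)} = insert 0 {1..CARD('n)}" by auto
  then have ins: "V ` {0..CARD('n)} = insert (V 0) (V ` {1..CARD('n)})" by simp
  have "V 0 \<notin> V ` {1..CARD('n)}"
  proof
    assume "V 0 \<in> V ` {1..CARD('n)}"
    then obtain j where "j \<in> {1..CARD('n)}" "V 0 = V j" by auto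
    with inj_onD[OF inj, of 0 j] show False by simp
  qed
  from affine_dependent_iff_dependent[OF this] ind ins
  show ?thesis by (simp add: image_image)
qed

lemma linear_functional_eq_inner:
  fixes g :: "real^'n::finite \<Rightarrow> real"
  assumes "linear g"
  shows "g x = (\<chi> l. g (axis l 1)) \<bullet> x"
proof -
  interpret g: linear g by fact
  have "g x = g (\<Sum>l\<in>UNIV. x$l *\<^sub>R axis l 1)"
    using basis_expansion[of x] by (simp add: scalar_mult_eq_scaleR)
  also have "\<dots> = (\<Sum>l\<in>UNIV. x$l * g (axis l 1))" by (simp add: g.sum g.scale)
  finally show ?thesis unfolding inner_vec_def by (simp add: mult.commute)
qed

lemma bary_coeffs_exists:
  fixes V :: "nat \<Rightarrow> real^'n::finite"
  assumes "nondeg_simplex V" "i \<in> {0..CARD('n)}"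
  shows "\<exists>p. \<forall>j\<in>{0..CARD('n)}. fst p \<bullet> V j + snd p = (if j = i then 1 else 0)"
proof -
  have inj: "inj_on V {0..CARD('n)}" using assms unfolding nondeg_simplex_def by auto
  define f where "f v = (if i \<noteq> 0 \<and> v = V i - V 0 then 1 else 0) - (if i = 0 then 1 else 0 :: real)" for v
  obtain g where g: "linear g" "\<And>x. x \<in> (\<lambda>j. V j - V 0) ` {1..CARD('n)} \<Longrightarrow> g x = f x"
    using linear_independent_extend[OF nondeg_simplex_edges_independent[OF assms(1)], of f] by blast
  define a where "a = (\<chi> l. g (axis l 1))"
  define c where "c = (if i = 0 then 1 else 0) - a \<bullet> V 0"
  have "a \<bullet> V j + c = (if j = i then 1 else 0)" if j: "j \<in> {0..CARD('n)}" for j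
  proof (cases "j = 0")
    case False
    then have "a \<bullet> (V j - V 0) = f (V j - V 0)"
      using j g(2)[of "V j - V 0"] linear_functional_eq_inner[OF g(1), of "V j - V 0", folded a_def]
      by simp
    moreover have "V j - V 0 = V i - V 0 \<longleftrightarrow> j = i" using inj j assms(2) by (auto simp: inj_on_def)
    ultimately show ?thesis using False unfolding c_def f_def by (auto simp: inner_diff_right)
  qed (simp add: c_def)
  then show ?thesis by (intro exI[of _ "(a, c)"]) simp
qed

lemma bgrad_inner_vertex:
  fixes V :: "nat \<Rightarrow> real^'n::finite"
  assumes "nondeg_simplex V" "i \<in> {0..CARD('n)}" "j \<in> {0..CARD('n)}"
  shows "bgrad V i \<bullet> V j + snd (bary_coeffs V i) = (if j = i then 1 else 0)"
proof -
  have "\<exists>!p. \<forall>j\<in>{0..CARD('n)}. fst p \<bullet> V j + snd p = (if j = i then 1 else 0)"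
  proof (rule ex_ex1I)
    show "\<exists>p. \<forall>j\<in>{0..CARD('n)}. fst p \<bullet> V j + snd p = (if j = i then 1 else 0)"
      by (rule bary_coeffs_exists[OF assms(1,2)])
  next
    fix p q assume p: "\<forall>j\<in>{0..CARD('n)}. fst p \<bullet> V j + snd p = (if j = i then 1 else 0)"
      and q: "\<forall>j\<in>{0..CARD('n)}. fst q \<bullet> V j + snd q = (if j = i then 1 else 0)"
    have "(fst p - fst q) \<bullet> V j + (snd p - snd q) = 0" if j: "j \<in> {0..CARD('n)}" for j
    proof -
      have "(fst p - fst q) \<bullet> V j + (snd p - snd q) = (fst p \<bullet> V j + snd p) - (fst q \<bullet> V j + snd q)"
        by (simp add: inner_diff_left)
      also have "\<dots> = 0" using p[rule_format, OF j] q[rule_format, OF j] by simp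
      finally show ?thesis .
    qed
    from affine_eq_zero_on_vertices[OF assms(1) this] show "p = q" by (simp add: prod_eq_iff)
  qed
  from theI'[OF this] assms(3) show ?thesis
    unfolding bgrad_def bary_coeffs_def[symmetric] by blast
qed

lemma bary_vertex:
  fixes V :: "nat \<Rightarrow> real^'n::finite"
  assumes "nondeg_simplex V" "i \<in> {0..CARD('n)}" "j \<in> {0..CARD('n)}"
  shows "bary V i (V j) = (if j = i then 1 else 0)"
  using bgrad_inner_vertex[OF assms] unfolding bary_def bgrad_def by simp

lemma bary_eq: "bary V i x = bgrad V i \<bullet> x + snd (bary_coeffs V i)"
  unfolding bary_def bgrad_def by simp

lemma bgrad_inner_edge:
  fixes V :: "nat \<Rightarrow> real^'n::finite"
  assumes "nondeg_simplex V" "i \<in> {0..CARD('n)}" "j \<in> {0..CARD('n)}" "l \<in> {0..CARD('n)}"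
  shows "bgrad V i \<bullet> (V j - V l) = (if j = i then 1 else 0) - (if l = i then 1 else 0)"
  using bgrad_inner_vertex[OF assms(1,2,3)] bgrad_inner_vertex[OF assms(1,2,4)]
  by (simp add: inner_diff_right)

lemma sum_bary_coeffs:
  fixes V :: "nat \<Rightarrow> real^'n::finite"
  assumes "nondeg_simplex V"
  shows "(\<Sum>i\<in>{0..CARD('n)}. bgrad V i) = 0" "(\<Sum>i\<in>{0..CARD('n)}. snd (bary_coeffs V i)) = 1"
proof -
  have "(\<Sum>i\<in>{0..CARD('n)}. bgrad V i) \<bullet> V j + ((\<Sum>i\<in>{0..CARD('n)}. snd (bary_coeffs V i)) - 1) = 0"
    if j: "j \<in> {0..CARD('n)}" for j
  proof -
    have "(\<Sum>i\<in>{0..CARD('n)}. bgrad V i) \<bullet> V j + (\<Sum>i\<in>{0..CARD('n)}. snd (bary_coeffs V i))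
        = (\<Sum>i\<in>{0..CARD('n)}. bgrad V i \<bullet> V j + snd (bary_coeffs V i))"
      by (simp add: inner_sum_left sum.distrib)
    also have "\<dots> = (\<Sum>i\<in>{0..CARD('n)}. if j = i then 1 else 0)"
      by (rule sum.cong) (use bgrad_inner_vertex[OF assms _ j] in auto)
    also have "\<dots> = 1" using j by simp
    finally show ?thesis by simp
  qed
  from affine_eq_zero_on_vertices[OF assms this] show "(\<Sum>i\<in>{0..CARD('n)}. bgrad V i) = 0" "(\<Sum>i\<in>{0..CARD('n)}. snd (bary_coeffs V i)) = 1"
    by auto
qed

lemma sum_bary:
  fixes V :: "nat \<Rightarrow> real^'n::finite"
  assumes "nondeg_simplex V"
  shows "(\<Sum>i\<in>{0..CARD('n)}. bary V i x) = 1"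
  using sum_bary_coeffs[OF assms] unfolding bary_eq
  by (simp add: sum.distrib inner_sum_left[symmetric])

lemma bgrad_expansion:
  fixes V :: "nat \<Rightarrow> real^'n::finite"
  assumes "nondeg_simplex V"
  shows "e = (\<Sum>i\<in>{0..CARD('n)}. (e \<bullet> V i) *\<^sub>R bgrad V i)"
    and "(\<Sum>i\<in>{0..CARD('n)}. (e \<bullet> V i) * snd (bary_coeffs V i)) = 0"
proof -
  let ?a = "e - (\<Sum>i\<in>{0..CARD('n)}. (e \<bullet> V i) *\<^sub>R bgrad V i)"
  let ?c = "- (\<Sum>i\<in>{0..CARD('n)}. (e \<bullet> V i) * snd (bary_coeffs V i))"
  have "?a \<bullet> V j + ?c = 0" if j: "j \<in> {0..CARD('n)}" for j
  proof -
    have "(\<Sum>i\<in>{0..CARD('n)}. (e \<bullet> V i) *\<^sub>R bgrad V i) \<bullet> V j - ?c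
      = (\<Sum>i\<in>{0..CARD('n)}. (e \<bullet> V i) * (bgrad V i \<bullet> V j + snd (bary_coeffs V i)))"
      by (simp add: inner_sum_left sum.distrib[symmetric] distrib_left)
    also have "\<dots> = (\<Sum>i\<in>{0..CARD('n)}. if i = j then e \<bullet> V i else 0)"
      by (rule sum.cong) (use bgrad_inner_vertex[OF assms _ j] in auto)
    also have "\<dots> = e \<bullet> V j" using j by (simp add: sum.delta')
    finally show ?thesis by (simp add: inner_diff_left)
  qed
  from affine_eq_zero_on_vertices[OF assms this]
  show "e = (\<Sum>i\<in>{0..CARD('n)}. (e \<bullet> V i) *\<^sub>R bgrad V i)"
    and "(\<Sum>i\<in>{0..CARD('n)}. (e \<bullet> V i) * snd (bary_coeffs V i)) = 0" by simp_all
qed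

lemma bary_expansion:
  fixes V :: "nat \<Rightarrow> real^'n::finite"
  assumes "nondeg_simplex V"
  shows "x = (\<Sum>i\<in>{0..CARD('n)}. bary V i x *\<^sub>R V i)"
proof -
  have key: "e \<bullet> (\<Sum>i\<in>{0..CARD('n)}. bary V i x *\<^sub>R V i) = e \<bullet> x" for e
  proof -
    have "e \<bullet> (\<Sum>i\<in>{0..CARD('n)}. bary V i x *\<^sub>R V i) = (\<Sum>i\<in>{0..CARD('n)}. bary V i x * (e \<bullet> V i))"
      by (simp add: inner_sum_right)
    also have "\<dots> = (\<Sum>i\<in>{0..CARD('n)}. (e \<bullet> V i) * (bgrad V i \<bullet> x)) + (\<Sum>i\<in>{0..CARD('n)}. (e \<bullet> V i) * snd (bary_coeffs V i))"
      unfolding bary_eq distrib_right sum.distrib by (simp add: mult.commute)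
    also have "(\<Sum>i\<in>{0..CARD('n)}. (e \<bullet> V i) * (bgrad V i \<bullet> x)) = (\<Sum>i\<in>{0..CARD('n)}. (e \<bullet> V i) *\<^sub>R bgrad V i) \<bullet> x"
      by (simp add: inner_sum_left)
    also have "\<dots> = e \<bullet> x" using bgrad_expansion(1)[OF assms, of e] by simp
    finally show ?thesis using bgrad_expansion(2)[OF assms, of e] by simp
  qed
  let ?R = "(\<Sum>i\<in>{0..CARD('n)}. bary V i x *\<^sub>R V i)"
  have "(x - ?R) \<bullet> (x - ?R) = 0" using key[of "x - ?R"] by (simp add: inner_diff_left inner_commute)
  then show ?thesis by simp
qed

lemma bgrad_expansion_at:
  fixes V :: "nat \<Rightarrow> real^'n::finite"
  assumes "nondeg_simplex V" "l \<in> {0..CARD('n)}"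
  shows "e = (\<Sum>i\<in>{0..CARD('n)} - {l}. (e \<bullet> (V i - V l)) *\<^sub>R bgrad V i)"
proof -
  have "(\<Sum>i\<in>{0..CARD('n)}. (e \<bullet> (V i - V l)) *\<^sub>R bgrad V i)
      = (\<Sum>i\<in>{0..CARD('n)}. (e \<bullet> V i) *\<^sub>R bgrad V i) - (e \<bullet> V l) *\<^sub>R (\<Sum>i\<in>{0..CARD('n)}. bgrad V i)"
    unfolding inner_diff_right scaleR_diff_left sum_subtractf scaleR_sum_right ..
  also have "\<dots> = e" using bgrad_expansion(1)[OF assms(1), of e] sum_bary_coeffs(1)[OF assms(1)] by simp
  finally have "e = (\<Sum>i\<in>{0..CARD('n)}. (e \<bullet> (V i - V l)) *\<^sub>R bgrad V i)" by simp
  also have "\<dots> = (\<Sum>i\<in>{0..CARD('n)} - {l}. (e \<bullet> (V i - V l)) *\<^sub>R bgrad V i)"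
    by (rule sum.mono_neutral_right) auto
  finally show ?thesis .
qed

lemma other_vertex:
  assumes "i \<in> {0..CARD('n::finite)}"
  obtains l where "l \<in> {0..CARD('n)}" "l \<noteq> i"
proof (cases "i = 0")
  case True
  then show ?thesis using that[of 1] finite_UNIV_card_ge_0[where 'a='n] by simp
qed (use that[of 0] in simp)

lemma bgrad_nonzero:
  fixes V :: "nat \<Rightarrow> real^'n::finite"
  assumes "nondeg_simplex V" "i \<in> {0..CARD('n)}"
  shows "bgrad V i \<noteq> 0"
proof
  assume z: "bgrad V i = 0"
  obtain l where l: "l \<in> {0..CARD('n)}" "l \<noteq> i"
    using other_vertex[OF assms(2)] by metis
  have "bgrad V i \<bullet> (V i - V l) = 1" using bgrad_inner_edge[OF assms(1,2,2) l(1)] l by simp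
  with z show False by simp
qed

lemma unit_normal_parallel:
  fixes V :: "nat \<Rightarrow> real^'n::finite"
  assumes "nondeg_simplex V" "j \<in> {0..CARD('n)}" "unit_normal V j n"
  shows "\<exists>s. n = s *\<^sub>R bgrad V j"
proof -
  obtain l where l: "l \<in> {0..CARD('n)}" "l \<noteq> j"
    using other_vertex[OF assms(2)] by metis
  have "n = (\<Sum>i\<in>{0..CARD('n)} - {l}. (n \<bullet> (V i - V l)) *\<^sub>R bgrad V i)"
    by (rule bgrad_expansion_at[OF assms(1) l(1)])
  also have "\<dots> = (\<Sum>i\<in>{0..CARD('n)} - {l}. if i = j then (n \<bullet> (V i - V l)) *\<^sub>R bgrad V i else 0)"
    by (rule sum.cong) (use assms(3) l in \<open>auto simp: unit_normal_def\<close>)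
  also have "\<dots> = (n \<bullet> (V j - V l)) *\<^sub>R bgrad V j" using assms(2) l by (simp add: sum.delta')
  finally show ?thesis by blast
qed

lemma poly_fun_bary: "poly_fun 1 (bary V i)"
  unfolding bary_def by (rule poly_fun_affine)

lemma bary_facet_zero:
  fixes V :: "nat \<Rightarrow> real^'n::finite"
  assumes "nondeg_simplex V" "j \<in> {0..CARD('n)}" "x \<in> facet V j"
  shows "bary V j x = 0"
proof -
  have "V ` ({0..CARD('n)} - {j}) \<subseteq> {x. bgrad V j \<bullet> x = - snd (bary_coeffs V j)}"
    using bgrad_inner_vertex[OF assms(1,2)] by (force simp: algebra_simps)
  then have "facet V j \<subseteq> {x. bgrad V j \<bullet> x = - snd (bary_coeffs V j)}"
    unfolding facet_def by (rule hull_minimal) (rule convex_hyperplane)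
  then show ?thesis using assms(3) unfolding bary_eq by auto
qed

definition simplex_chart :: "(nat \<Rightarrow> real^'n::finite) \<Rightarrow> nat \<Rightarrow> ('n \<Rightarrow> nat) \<Rightarrow> real^'n \<Rightarrow> real^'n"
  where "simplex_chart V j0 \<sigma> t = V j0 + (\<Sum>i\<in>UNIV. (t$i) *\<^sub>R (V (\<sigma> i) - V j0))"

lemma poly_fun_simplex_chart: "poly_fun 1 (\<lambda>t. simplex_chart V j0 \<sigma> t $ r)"
proof -
  have chart: "(\<lambda>t. simplex_chart V j0 \<sigma> t $ r) =
      (\<lambda>t. V j0 $ r + (\<Sum>i\<in>UNIV. (V (\<sigma> i) - V j0) $ r * t $ i))"
    unfolding simplex_chart_def by (simp add: mult.commute)
  show ?thesis unfolding chart
    by (intro poly_fun_add poly_fun_const poly_fun_sum poly_fun_cmult poly_fun_coord) simp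
qed

lemma simplex_chart_bary:
  fixes V :: "nat \<Rightarrow> real^'n::finite"
  assumes nd: "nondeg_simplex V" and \<sigma>: "bij_betw \<sigma> UNIV ({0..CARD('n)} - {j0})"
  shows "simplex_chart V j0 \<sigma> (\<chi> i. bary V (\<sigma> i) x) = x"
proof -
  let ?J = "{0..CARD('n)} - {j0}"
  have "(\<Sum>i\<in>UNIV. bary V (\<sigma> i) x *\<^sub>R (V (\<sigma> i) - V j0)) = (\<Sum>l\<in>?J. bary V l x *\<^sub>R (V l - V j0))"
    by (rule sum.reindex_bij_betw[OF \<sigma>])
  also have "\<dots> = (\<Sum>l\<in>{0..CARD('n)}. bary V l x *\<^sub>R (V l - V j0))"
    by (rule sum.mono_neutral_left) auto
  also have "\<dots> = (\<Sum>l\<in>{0..CARD('n)}. bary V l x *\<^sub>R V l) - (\<Sum>l\<in>{0..CARD('n)}. bary V l x) *\<^sub>R V j0"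
    by (simp add: scaleR_diff_right sum_subtractf scaleR_sum_left)
  also have "\<dots> = x - V j0" using bary_expansion[OF nd, of x] sum_bary[OF nd, of x] by simp
  finally show ?thesis unfolding simplex_chart_def by simp
qed

lemma simplex_chart_in_facet:
  fixes V :: "nat \<Rightarrow> real^'n::finite"
  assumes \<sigma>: "bij_betw \<sigma> UNIV ({0..CARD('n)} - {j0})" and j0: "j0 \<in> {0..CARD('n)}"
    and t: "\<And>i. 0 \<le> t$i" "(\<Sum>i\<in>UNIV. t$i) \<le> 1" "t$e = 0"
  shows "simplex_chart V j0 \<sigma> t \<in> facet V (\<sigma> e)"
proof -
  let ?J = "{0..CARD('n)} - {j0}"
  define w where "w l = (if l = j0 then 1 - (\<Sum>i\<in>UNIV. t$i) else t $ inv_into UNIV \<sigma> l)" for l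
  have w\<sigma>: "w (\<sigma> i) = t$i" for i
    using \<sigma> bij_betw_apply[OF \<sigma>] by (auto simp: w_def bij_betw_def inv_into_f_f)
  have j: "\<sigma> e \<in> {0..CARD('n)}" "\<sigma> e \<noteq> j0" using bij_betw_apply[OF \<sigma>] by auto
  have J: "(\<Sum>l\<in>?J. f (w l) l) = (\<Sum>i\<in>UNIV. f (t$i) (\<sigma> i))" for f :: "real \<Rightarrow> nat \<Rightarrow> 'a::comm_monoid_add"
    using sum.reindex_bij_betw[OF \<sigma>, of "\<lambda>l. f (w l) l"] by (simp add: w\<sigma>)
  have split: "(\<Sum>l\<in>{0..CARD('n)}. f l) = f j0 + (\<Sum>l\<in>?J. f l)" for f :: "nat \<Rightarrow> 'a::comm_monoid_add"
    using j0 by (subst sum.remove[of _ j0]) auto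
  have "simplex_chart V j0 \<sigma> t = (\<Sum>l\<in>{0..CARD('n)}. w l *\<^sub>R V l)"
    unfolding split J[of "\<lambda>c l. c *\<^sub>R V l"]
    by (simp add: simplex_chart_def w_def scaleR_diff_right sum_subtractf scaleR_sum_left algebra_simps)
  also have "\<dots> = (\<Sum>l\<in>{0..CARD('n)} - {\<sigma> e}. w l *\<^sub>R V l)"
    by (rule sum.mono_neutral_right) (use j w\<sigma>[of e] t(3) in auto)
  also have "\<dots> \<in> facet V (\<sigma> e)"
    unfolding facet_def
  proof (rule convex_sum)
    have "(\<Sum>l\<in>{0..CARD('n)}. w l) = 1" unfolding split J[of "\<lambda>c l. c"] by (simp add: w_def)
    then show "sum w ({0..CARD('n)} - {\<sigma> e}) = 1"
      using j w\<sigma>[of e] t(3) by (subst (asm) sum.remove[of _ "\<sigma> e"]) auto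
    show "0 \<le> w l" for l using t unfolding w_def by auto
  qed (auto intro: hull_inc)
  finally show ?thesis .
qed

lemma simplex_chart_slice_in_facet:
  fixes V :: "nat \<Rightarrow> real^'n::finite"
  assumes \<sigma>: "bij_betw \<sigma> UNIV ({0..CARD('n)} - {j0})" and j0: "j0 \<in> {0..CARD('n)}"
    and t: "t \<in> box 0 (\<chi> i. 1 / CARD('n))"
  shows "simplex_chart V j0 \<sigma> (vec_upd t e 0) \<in> facet V (\<sigma> e)"
proof (rule simplex_chart_in_facet[OF \<sigma> j0])
  have t: "0 < t$i" "t$i < 1 / CARD('n)" for i using t by (auto simp: mem_box_cart)
  then show "0 \<le> vec_upd t e 0 $ i" for i by (simp add: vec_upd_nth less_imp_le)
  have "(\<Sum>i\<in>UNIV. vec_upd t e 0 $ i) \<le> (\<Sum>i\<in>(UNIV::'n set). 1 / CARD('n))"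
    by (rule sum_mono) (use t in \<open>auto simp: vec_upd_nth less_imp_le\<close>)
  then show "(\<Sum>i\<in>UNIV. vec_upd t e 0 $ i) \<le> 1" by simp
qed (simp add: vec_upd_nth)

lemma simplex_chart_for_facet:
  assumes j: "j \<in> {0..CARD('n::finite)}"
  obtains j0 \<sigma> e where "j0 \<in> {0..CARD('n)}" "bij_betw \<sigma> (UNIV :: 'n set) ({0..CARD('n)} - {j0})"
    "\<sigma> e = j"
proof -
  obtain j0 where j0: "j0 \<in> {0..CARD('n)}" "j0 \<noteq> j" using other_vertex[OF j] by metis
  have "card ({0..CARD('n)} - {j0}) = card (UNIV :: 'n set)" using j0 by simp
  then obtain \<sigma> where \<sigma>: "bij_betw \<sigma> (UNIV :: 'n set) ({0..CARD('n)} - {j0})"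
    using finite_same_card_bij[of "UNIV :: 'n set" "{0..CARD('n)} - {j0}"] by auto
  moreover obtain e where "\<sigma> e = j" using \<sigma> j j0 by (metis bij_betw_imp_surj_on imageE insert_Diff insert_iff)
  ultimately show ?thesis using that j0 by blast
qed

text \<open>In the chart the facet becomes the coordinate hyperplane \<open>t\<^sub>e = 0\<close>, and the
  coordinate \<open>t\<^sub>e\<close> split off there is \<open>\<lambda>\<^sub>j\<close>.\<close>
lemma poly_fun_vanishing_on_facet:
  fixes V :: "nat \<Rightarrow> real^'n::finite" and p :: "real^'n \<Rightarrow> real"
  assumes nd: "nondeg_simplex V" and j: "j \<in> {0..CARD('n)}" and p: "poly_fun k p"
    and p_facet: "\<And>x. x \<in> facet V j \<Longrightarrow> p x = 0"
  obtains q where "poly_fun (k - 1) q" "\<And>x. p x = bary V j x * q x"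
proof -
  obtain j0 \<sigma> e where j0: "j0 \<in> {0..CARD('n)}"
    and \<sigma>: "bij_betw \<sigma> (UNIV :: 'n set) ({0..CARD('n)} - {j0})"
    and e: "\<sigma> e = j"
    using simplex_chart_for_facet[OF j] by metis
  define P where "P t = p (simplex_chart V j0 \<sigma> t)" for t
  have "poly_fun k P" unfolding P_def by (rule poly_fun_compose_affine[OF p poly_fun_simplex_chart])
  then obtain Q where Q: "poly_fun (k - 1) Q" "\<And>t. P t = P (vec_upd t e 0) + t$e * Q t"
    using poly_fun_split_coord by metis
  have P_slice: "P (vec_upd t e 0) = 0" for t
  proof (rule poly_fun_zero_on_open[where p = "\<lambda>t. P (vec_upd t e 0)"])
    show "poly_fun k (\<lambda>t. P (vec_upd t e 0))"
      by (rule poly_fun_compose_affine[OF \<open>poly_fun k P\<close> poly_fun_vec_upd_coord])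
    let ?U = "box 0 (\<chi> i. 1 / CARD('n))"
    have "(\<chi> i. 1 / CARD('n) / 2) \<in> ?U" by (simp add: mem_box_cart divide_strict_left_mono)
    then show "open ?U" "?U \<noteq> {}" by auto
    show "P (vec_upd t e 0) = 0" if "t \<in> ?U" for t
      unfolding P_def using p_facet simplex_chart_slice_in_facet[OF \<sigma> j0 that] e by blast
  qed
  define q where "q x = Q (\<chi> i. bary V (\<sigma> i) x)" for x
  show ?thesis
  proof
    show "poly_fun (k - 1) q" unfolding q_def
      by (rule poly_fun_compose_affine[OF Q(1)]) (simp only: vec_lambda_beta poly_fun_bary)
    fix x
    have "p x = P (\<chi> i. bary V (\<sigma> i) x)" unfolding P_def simplex_chart_bary[OF nd \<sigma>] ..
    also have "\<dots> = bary V j x * q x"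
      using Q(2)[of "\<chi> i. bary V (\<sigma> i) x"] P_slice unfolding q_def e[symmetric] by simp
    finally show "p x = bary V j x * q x" .
  qed
qed


section \<open>Bubble functions\<close>

lemma sum_fun_apply: "(\<Sum>i\<in>A. F i) x = (\<Sum>i\<in>A. F i x)"
  by (induction A rule: infinite_finite_induct) auto

lemma trace_scaleR: "trace (c *\<^sub>R (M::real^'n::finite^'n)) = c * trace M"
  unfolding trace_def by (simp add: sum_distrib_left)

lemma trace_sum: "trace (\<Sum>p\<in>A. F p :: real^'n::finite^'n) = (\<Sum>p\<in>A. trace (F p))"
  unfolding trace_def by (simp add: sum.swap[of _ UNIV])

lemma trace_dev: "trace (dev (M::real^'n::finite^'n)) = 0"
  unfolding dev_def by (simp add: trace_sub trace_scaleR trace_I)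

lemma outer_mult_vec: "outer a b *v n = (b \<bullet> n) *\<^sub>R a"
  unfolding outer_def
  by (simp add: vec_eq_iff matrix_vector_mult_def inner_vec_def sum_distrib_left mult_ac)

lemma dev_mult_vec: "dev M *v n = M *v n - (trace M / real CARD('n)) *\<^sub>R (n::real^'n::finite)"
  unfolding dev_def
  by (simp add: matrix_vector_mult_diff_rdistrib scaleR_matrix_vector_assoc[symmetric])

lemma inner_dev_outer_mult_vec:
  fixes a b u w :: "real^'n::finite"
  assumes "u \<bullet> w = 0"
  shows "u \<bullet> (dev (outer a b) *v w) = (b \<bullet> w) * (u \<bullet> a)"
  using assms unfolding dev_mult_vec outer_mult_vec by (simp add: inner_diff_right)

lemma tang_part_scaleR: "tang_part (c *\<^sub>R M) n = c *\<^sub>R tang_part M n"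
  unfolding tang_part_def by (simp add: scaleR_matrix_vector_assoc[symmetric] algebra_simps)

lemma tang_part_dev_outer:
  fixes a b n :: "real^'n::finite"
  assumes "norm n = 1"
  shows "tang_part (dev (outer a b)) n = (b \<bullet> n) *\<^sub>R (a - (a \<bullet> n) *\<^sub>R n)"
proof -
  have "n \<bullet> n = 1" using assms by (simp add: dot_square_norm)
  then show ?thesis unfolding tang_part_def dev_mult_vec outer_mult_vec
    by (simp add: inner_diff_right algebra_simps inner_commute)
qed

lemma tang_part_dev_outer_facet:
  fixes V :: "nat \<Rightarrow> real^'n::finite"
  assumes nd: "nondeg_simplex V" and j: "j \<in> {0..CARD('n)}" and n: "unit_normal V j n"
    and ab: "b \<bullet> bgrad V j = 0 \<or> a = bgrad V j"
  shows "tang_part (dev (outer a b)) n = 0"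
proof -
  obtain s where s: "n = s *\<^sub>R bgrad V j" using unit_normal_parallel[OF nd j n] by blast
  have n1: "norm n = 1" using n unfolding unit_normal_def by simp
  have "s * (bgrad V j \<bullet> n) = n \<bullet> n" by (simp add: s)
  also have "\<dots> = 1" using n1 by (simp add: dot_square_norm)
  finally have "s * (bgrad V j \<bullet> n) = 1" .
  then have "a = bgrad V j \<Longrightarrow> (a \<bullet> n) *\<^sub>R n = a" by (simp add: s mult.commute)
  then show ?thesis unfolding tang_part_dev_outer[OF n1] using ab by (auto simp: s)
qed

lemma inner_mult_vec_expand: "u \<bullet> (M *v w) = (\<Sum>r\<in>UNIV. \<Sum>s\<in>UNIV. u$r * M$r$s * w$s)"
  unfolding inner_vec_def matrix_vector_mult_def by (simp add: sum_distrib_left mult_ac)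

lemma poly_fun_inner_mult_vec:
  assumes "mpoly_fun k b"
  shows "poly_fun k (\<lambda>x. u \<bullet> (b x *v w))"
  unfolding inner_mult_vec_expand
proof (intro poly_fun_sum finite)
  fix r s
  have "poly_fun k (\<lambda>x. (u$r * w$s) * b x $ r $ s)"
    using assms unfolding mpoly_fun_def by (intro poly_fun_cmult) simp
  then show "poly_fun k (\<lambda>x. u $ r * b x $ r $ s * w $ s)" by (simp add: mult_ac)
qed

lemma inner_sum_scaleR_mult_vec:
  fixes M :: "'q \<Rightarrow> real^'n::finite^'n"
  shows "u \<bullet> ((\<Sum>p\<in>A. c p *\<^sub>R M p) *v w) = (\<Sum>p\<in>A. c p * (u \<bullet> (M p *v w)))"
proof (induction A rule: infinite_finite_induct)
  case (insert x F)
  then show ?case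
    by (simp add: matrix_vector_mult_add_rdistrib inner_add_right scaleR_matrix_vector_assoc[symmetric])
qed auto

lemma Bub_spI:
  fixes \<tau> :: "real^'n::finite \<Rightarrow> real^'n^'n"
  assumes "mpoly_fun k \<tau>" "\<And>x. trace (\<tau> x) = 0"
    "\<And>i n x. i \<in> {0..CARD('n)} \<Longrightarrow> unit_normal V i n \<Longrightarrow> x \<in> facet V i \<Longrightarrow> tang_part (\<tau> x) n = 0"
  shows "\<tau> \<in> Bub_sp k V"
proof -
  have "vpoly_fun (k - 1) (\<lambda>x::real^'n. 0::real^'n)" unfolding vpoly_fun_def by (simp add: poly_fun_zero)
  then show ?thesis unfolding Bub_sp_def Sigma_sp_def using assms by fastforce
qed

lemma Bub_spD:
  assumes "\<tau> \<in> Bub_sp k V"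
  shows "mpoly_fun k \<tau>" "\<And>x. trace (\<tau> x) = 0"
    "\<And>i n x. i \<in> {0..CARD('n::finite)} \<Longrightarrow> unit_normal V i n \<Longrightarrow> x \<in> facet V i \<Longrightarrow>
       tang_part (\<tau> x) n = (0::real^'n)"
  using assms unfolding Bub_sp_def Sigma_sp_def by auto

lemma bubble_in_Bub_sp:
  fixes V :: "nat \<Rightarrow> real^'n::finite" and S :: "real^'n^'n"
  assumes nd: "nondeg_simplex V" and i: "i \<in> {0..CARD('n)}" and k: "k \<ge> 1"
    and \<mu>: "poly_fun (k - 1) \<mu>" and trace_S: "trace S = 0"
    and tang_S: "\<And>j n. j \<in> {0..CARD('n)} \<Longrightarrow> j \<noteq> i \<Longrightarrow> unit_normal V j n \<Longrightarrow> tang_part S n = 0"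
  shows "(\<lambda>x. (\<mu> x * bary V i x) *\<^sub>R S) \<in> Bub_sp k V"
proof (rule Bub_spI)
  have "poly_fun (k - 1 + 1) (\<lambda>x. \<mu> x * bary V i x)" by (rule poly_fun_mult[OF \<mu> poly_fun_bary])
  then have "poly_fun k (\<lambda>x. S$r$s * (\<mu> x * bary V i x))" for r s using k by (intro poly_fun_cmult) simp
  then show "mpoly_fun k (\<lambda>x. (\<mu> x * bary V i x) *\<^sub>R S)" unfolding mpoly_fun_def by (simp add: mult_ac)
  show "trace ((\<mu> x * bary V i x) *\<^sub>R S) = 0" for x by (simp add: trace_scaleR trace_S)
  fix j n x assume j: "j \<in> {0..CARD('n)}" and n: "unit_normal V j n" and x: "x \<in> facet V j"
  show "tang_part ((\<mu> x * bary V i x) *\<^sub>R S) n = 0"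
  proof (cases "j = i")
    case True
    then show ?thesis using bary_facet_zero[OF nd j x] by (simp add: tang_part_def)
  next
    case False
    then show ?thesis using tang_S[OF j False n] by (simp add: tang_part_scaleR)
  qed
qed

lemma Bub_sp_inner_bgrad_facet:
  fixes V :: "nat \<Rightarrow> real^'n::finite"
  assumes nd: "nondeg_simplex V" and b: "b \<in> Bub_sp k V" and j: "j \<in> {0..CARD('n)}"
    and x: "x \<in> facet V j" and u: "u \<bullet> bgrad V j = 0"
  shows "u \<bullet> (b x *v bgrad V j) = 0"
proof -
  let ?g = "bgrad V j"
  have g0: "norm ?g \<noteq> 0" using bgrad_nonzero[OF nd j] by simp
  define n where "n = (1 / norm ?g) *\<^sub>R ?g"
  have "unit_normal V j n" unfolding unit_normal_def n_def using g0
    by (auto simp: bgrad_inner_edge[OF nd j])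
  then have "tang_part (b x) n = 0" using Bub_spD(3)[OF b j _ x] by blast
  then have bn: "b x *v n = (n \<bullet> (b x *v n)) *\<^sub>R n" unfolding tang_part_def by simp
  have "?g = norm ?g *\<^sub>R n" unfolding n_def using g0 by simp
  then have "u \<bullet> (b x *v ?g) = norm ?g * (u \<bullet> (b x *v n))"
    by (metis inner_scaleR_right matrix_vector_mult_scaleR)
  also have "u \<bullet> (b x *v n) = 0" using u by (subst bn) (simp add: n_def)
  finally show ?thesis by simp
qed

context vector_space
begin

lemma dim_eq_card_independent_family:
  assumes fin: "finite I" and sub: "f ` I \<subseteq> W" and spans: "W \<subseteq> span (f ` I)"
    and indep: "\<And>w. (\<Sum>i\<in>I. scale (w i) (f i)) = 0 \<Longrightarrow> \<forall>i\<in>I. w i = 0"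
  shows "dim W = card I"
proof -
  have inj: "inj_on f I"
  proof (rule inj_onI, rule ccontr)
    fix a b assume a: "a \<in> I" and b: "b \<in> I" and fab: "f a = f b" and "a \<noteq> b"
    let ?w = "\<lambda>i. (if i = a then 1 else 0) - (if i = b then 1 else 0)"
    have "(\<Sum>i\<in>I. scale (?w i) (f i)) = f a - f b"
      using a b fin by (simp add: scale_left_diff_distrib sum_subtractf if_distrib[of "\<lambda>c. scale c _"]
          cong: if_cong)
    with fab have "(\<Sum>i\<in>I. scale (?w i) (f i)) = 0" by simp
    from bspec[OF indep[OF this] a] show False using \<open>a \<noteq> b\<close> by simp
  qed
  have "independent (f ` I)"
  proof (rule independent_if_scalars_zero)
    fix g v assume g: "(\<Sum>v\<in>f ` I. scale (g v) v) = 0" and v: "v \<in> f ` I"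
    have "(\<Sum>i\<in>I. scale (g (f i)) (f i)) = 0" using g by (simp add: sum.reindex[OF inj])
    from indep[OF this] v show "g v = 0" by auto
  qed (use fin in simp)
  with sub spans have "dim W = card (f ` I)" by (intro dim_unique) auto
  with inj show ?thesis by (simp add: card_image)
qed

end

lemma fun_vector_space: "vector_space (\<lambda>(c::real) (f::'a \<Rightarrow> 'b::real_vector) x. c *\<^sub>R f x)"
  by unfold_locales (auto simp: fun_eq_iff algebra_simps)


section \<open>Bubble spaces with a dual system of shape functions\<close>

lemma continuous_on_bary: "continuous_on UNIV (bary V i)"
  unfolding bary_def by (intro continuous_intros)

locale bubble_frame =
  fixes V :: "nat \<Rightarrow> real^'n::finite" and Q :: "'q set" and \<iota> :: "'q \<Rightarrow> nat"
    and S :: "'q \<Rightarrow> real^'n^'n" and u :: "'q \<Rightarrow> real^'n"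
  assumes nondeg: "nondeg_simplex V"
    and finite_Q: "finite Q"
    and vertex: "\<And>p. p \<in> Q \<Longrightarrow> \<iota> p \<in> {0..CARD('n)}"
    and trace_S: "\<And>p. p \<in> Q \<Longrightarrow> trace (S p) = 0"
    and tang_S: "\<And>p j n. p \<in> Q \<Longrightarrow> j \<in> {0..CARD('n)} \<Longrightarrow> j \<noteq> \<iota> p \<Longrightarrow> unit_normal V j n \<Longrightarrow>
      tang_part (S p) n = 0"
    and u_orth: "\<And>p. p \<in> Q \<Longrightarrow> u p \<bullet> bgrad V (\<iota> p) = 0"
    and dual_offdiag: "\<And>p p'. p \<in> Q \<Longrightarrow> p' \<in> Q \<Longrightarrow> p \<noteq> p' \<Longrightarrow> u p \<bullet> (S p' *v bgrad V (\<iota> p)) = 0"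
    and dual_diag: "\<And>p. p \<in> Q \<Longrightarrow> u p \<bullet> (S p *v bgrad V (\<iota> p)) \<noteq> 0"
    and dual_separating: "\<And>N. trace N = 0 \<Longrightarrow> (\<And>p. p \<in> Q \<Longrightarrow> u p \<bullet> (N *v bgrad V (\<iota> p)) = 0) \<Longrightarrow> N = 0"
begin

lemma dual_combination:
  assumes "p \<in> Q"
  shows "u p \<bullet> ((\<Sum>p'\<in>Q. c p' *\<^sub>R S p') *v bgrad V (\<iota> p)) = c p * (u p \<bullet> (S p *v bgrad V (\<iota> p)))"
proof -
  have "u p \<bullet> ((\<Sum>p'\<in>Q. c p' *\<^sub>R S p') *v bgrad V (\<iota> p)) =
      (\<Sum>p'\<in>Q. if p' = p then c p * (u p \<bullet> (S p *v bgrad V (\<iota> p))) else 0)"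
    unfolding inner_sum_scaleR_mult_vec by (intro sum.cong refl) (auto simp: dual_offdiag assms)
  also have "\<dots> = c p * (u p \<bullet> (S p *v bgrad V (\<iota> p)))" using assms finite_Q by simp
  finally show ?thesis .
qed

lemma bubble_term_in_Bub_sp:
  "p \<in> Q \<Longrightarrow> k \<ge> 1 \<Longrightarrow> poly_fun (k - 1) \<mu> \<Longrightarrow> (\<lambda>x. (\<mu> x * bary V (\<iota> p) x) *\<^sub>R S p) \<in> Bub_sp k V"
  by (rule bubble_in_Bub_sp[OF nondeg vertex _ _ trace_S tang_S])

lemma Bub_sp_decomposition:
  assumes k: "k \<ge> 1" and b: "b \<in> Bub_sp k V"
  obtains \<mu> where "\<And>p. p \<in> Q \<Longrightarrow> poly_fun (k - 1) (\<mu> p)"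
    "b = (\<lambda>x. \<Sum>p\<in>Q. (\<mu> p x * bary V (\<iota> p) x) *\<^sub>R S p)"
proof -
  define \<psi> where "\<psi> p M = u p \<bullet> (M *v bgrad V (\<iota> p)) / (u p \<bullet> (S p *v bgrad V (\<iota> p)))" for p M
  have "\<exists>q. poly_fun (k - 1) q \<and> (\<forall>x. \<psi> p (b x) = bary V (\<iota> p) x * q x)" if p: "p \<in> Q" for p
  proof -
    have "poly_fun k (\<lambda>x. \<psi> p (b x))" unfolding \<psi>_def divide_inverse mult.commute[of _ "inverse _"]
      by (intro poly_fun_cmult poly_fun_inner_mult_vec Bub_spD(1)[OF b])
    moreover have "\<psi> p (b x) = 0" if "x \<in> facet V (\<iota> p)" for x
      unfolding \<psi>_def using Bub_sp_inner_bgrad_facet[OF nondeg b vertex[OF p] that u_orth[OF p]] by simp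
    ultimately show ?thesis using poly_fun_vanishing_on_facet[OF nondeg vertex[OF p]] by metis
  qed
  then obtain \<mu> where \<mu>: "\<And>p. p \<in> Q \<Longrightarrow> poly_fun (k - 1) (\<mu> p)"
    "\<And>p x. p \<in> Q \<Longrightarrow> \<psi> p (b x) = bary V (\<iota> p) x * \<mu> p x"
    by metis
  have "b x = (\<Sum>p\<in>Q. (\<mu> p x * bary V (\<iota> p) x) *\<^sub>R S p)" for x
  proof -
    define N where "N = b x - (\<Sum>p\<in>Q. (\<mu> p x * bary V (\<iota> p) x) *\<^sub>R S p)"
    have "trace N = 0" unfolding N_def
      by (simp add: trace_sub trace_sum trace_scaleR trace_S Bub_spD(2)[OF b])
    moreover have "u p \<bullet> (N *v bgrad V (\<iota> p)) = 0" if p: "p \<in> Q" for p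
      using \<mu>(2)[OF p, of x] dual_diag[OF p] unfolding N_def \<psi>_def
      by (simp add: matrix_vector_mult_diff_rdistrib inner_diff_right dual_combination[OF p] field_simps)
    ultimately have "N = 0" by (rule dual_separating)
    then show ?thesis unfolding N_def by simp
  qed
  then show ?thesis using that \<mu>(1) by blast
qed

lemma bubble_coeffs_unique:
  assumes zero: "\<And>x. (\<Sum>p\<in>Q. (\<mu> p x * bary V (\<iota> p) x) *\<^sub>R S p) = 0"
    and p: "p \<in> Q" and \<mu>: "poly_fun m (\<mu> p)"
  shows "\<mu> p y = 0"
proof (rule poly_fun_zero_on_open[OF \<mu>])
  show "open {x. bary V (\<iota> p) x \<noteq> 0}"
    by (rule open_Collect_neq) (simp_all add: continuous_on_bary)
  have "V (\<iota> p) \<in> {x. bary V (\<iota> p) x \<noteq> 0}"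
    using bary_vertex[OF nondeg vertex[OF p] vertex[OF p]] by simp
  then show "{x. bary V (\<iota> p) x \<noteq> 0} \<noteq> {}" by blast
  fix x assume "x \<in> {x. bary V (\<iota> p) x \<noteq> 0}"
  moreover have "(\<mu> p x * bary V (\<iota> p) x) * (u p \<bullet> (S p *v bgrad V (\<iota> p))) = 0"
    using dual_combination[OF p, of "\<lambda>p. \<mu> p x * bary V (\<iota> p) x"] zero[of x] by simp
  ultimately show "\<mu> p x = 0" using dual_diag[OF p] by simp
qed

definition bubble_basis :: "'q \<times> ('n \<Rightarrow> nat) \<Rightarrow> real^'n \<Rightarrow> real^'n^'n" where
  "bubble_basis c = (\<lambda>x. (monomial (snd c) x * bary V (\<iota> (fst c)) x) *\<^sub>R S (fst c))"

lemma bubble_basis_combination: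
  assumes "finite M"
  shows "(\<Sum>c\<in>Q \<times> M. (\<lambda>x. w c *\<^sub>R bubble_basis c x)) x =
    (\<Sum>p\<in>Q. ((\<Sum>\<alpha>\<in>M. w (p, \<alpha>) * monomial \<alpha> x) * bary V (\<iota> p) x) *\<^sub>R S p)"
proof -
  have "(\<Sum>p\<in>Q. ((\<Sum>\<alpha>\<in>M. w (p, \<alpha>) * monomial \<alpha> x) * bary V (\<iota> p) x) *\<^sub>R S p)
      = (\<Sum>p\<in>Q. \<Sum>\<alpha>\<in>M. w (p, \<alpha>) *\<^sub>R bubble_basis (p, \<alpha>) x)"
    unfolding bubble_basis_def by (simp add: sum_distrib_right scaleR_sum_left mult.assoc)
  also have "\<dots> = (\<Sum>c\<in>Q \<times> M. w c *\<^sub>R bubble_basis c x)"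
    by (subst sum.cartesian_product) (rule sum.cong; auto)
  finally show ?thesis by (simp add: sum_fun_apply)
qed

lemma bubble_basis_in_Bub_sp:
  assumes "k \<ge> 1" "c \<in> Q \<times> multi_indices (k - 1)"
  shows "bubble_basis c \<in> Bub_sp k V"
proof -
  obtain p \<alpha> where "c = (p, \<alpha>)" "p \<in> Q" "\<alpha> \<in> multi_indices (k - 1)" using assms(2) by blast
  then show ?thesis
    unfolding bubble_basis_def using bubble_term_in_Bub_sp[OF _ assms(1) poly_fun_monomial] by simp
qed

lemma Bub_sp_combination:
  assumes k: "k \<ge> 1" and b: "b \<in> Bub_sp k V"
  obtains w where "b = (\<Sum>c\<in>Q \<times> multi_indices (k - 1). (\<lambda>x. w c *\<^sub>R bubble_basis c x))"
proof -
  obtain \<mu> where \<mu>: "\<And>p. p \<in> Q \<Longrightarrow> poly_fun (k - 1) (\<mu> p)"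
    "b = (\<lambda>x. \<Sum>p\<in>Q. (\<mu> p x * bary V (\<iota> p) x) *\<^sub>R S p)"
    using Bub_sp_decomposition[OF k b] by blast
  have "\<exists>c. \<mu> p = (\<lambda>x. \<Sum>\<alpha>\<in>multi_indices (k - 1). c \<alpha> * monomial \<alpha> x)" if "p \<in> Q" for p
    using \<mu>(1)[OF that] unfolding poly_fun_altdef .
  then obtain a where a: "\<And>p. p \<in> Q \<Longrightarrow> \<mu> p = (\<lambda>x. \<Sum>\<alpha>\<in>multi_indices (k - 1). a p \<alpha> * monomial \<alpha> x)"
    by metis
  have "b x = (\<Sum>c\<in>Q \<times> multi_indices (k - 1). (\<lambda>x. case_prod a c *\<^sub>R bubble_basis c x)) x" for x
    unfolding bubble_basis_combination[OF finite_multi_indices] \<mu>(2)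
    by (intro sum.cong refl) (simp add: a)
  then show ?thesis using that by blast
qed

lemma bubble_basis_independent:
  assumes "finite M" "(\<Sum>c\<in>Q \<times> M. (\<lambda>x. w c *\<^sub>R bubble_basis c x)) = 0"
    and c: "c \<in> Q \<times> M"
  shows "w c = 0"
proof -
  obtain p \<alpha> where c: "c = (p, \<alpha>)" "p \<in> Q" "\<alpha> \<in> M" using c by blast
  have "(\<Sum>p\<in>Q. ((\<Sum>\<alpha>\<in>M. w (p, \<alpha>) * monomial \<alpha> x) * bary V (\<iota> p) x) *\<^sub>R S p) = 0" for x
    using bubble_basis_combination[OF assms(1), of w x] assms(2) by simp
  moreover have "poly_fun (sum (\<lambda>\<alpha>. sum \<alpha> UNIV) M) (\<lambda>x. \<Sum>\<alpha>\<in>M. w (p, \<alpha>) * monomial \<alpha> x)"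
    using assms(1) by (intro poly_fun_sum poly_fun_cmult poly_fun_monomial)
      (auto simp: multi_indices_def intro: member_le_sum)
  ultimately have "(\<Sum>\<alpha>\<in>M. w (p, \<alpha>) * monomial \<alpha> x) = 0" for x
    using bubble_coeffs_unique[of "\<lambda>p x. \<Sum>\<alpha>\<in>M. w (p, \<alpha>) * monomial \<alpha> x"] c(2) by blast
  then show ?thesis using monomial_coeffs_unique[OF assms(1) _ c(3), of "\<lambda>\<alpha>. w (p, \<alpha>)"] c(1) by blast
qed

lemma fdim_Bub_sp:
  assumes k: "k \<ge> 1"
  shows "fdim (Bub_sp k V) = card Q * card (multi_indices (k - 1) :: ('n \<Rightarrow> nat) set)"
proof -
  interpret F: vector_space "\<lambda>(c::real) (f::real^'n \<Rightarrow> real^'n^'n) x. c *\<^sub>R f x"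
    by (rule fun_vector_space)
  let ?I = "Q \<times> (multi_indices (k - 1) :: ('n \<Rightarrow> nat) set)"
  have "F.dim (Bub_sp k V) = card ?I"
  proof (rule F.dim_eq_card_independent_family)
    show "Bub_sp k V \<subseteq> F.span (bubble_basis ` ?I)"
    proof
      fix b assume "b \<in> Bub_sp k V"
      then obtain w where "b = (\<Sum>c\<in>?I. (\<lambda>x. w c *\<^sub>R bubble_basis c x))"
        by (rule Bub_sp_combination[OF k])
      also have "\<dots> \<in> F.span (bubble_basis ` ?I)"
        by (intro F.span_sum F.span_scale[of "bubble_basis _", simplified] F.span_base) simp
      finally show "b \<in> F.span (bubble_basis ` ?I)" .
    qed
    show "\<forall>c\<in>?I. w c = 0" if "(\<Sum>c\<in>?I. (\<lambda>x. w c *\<^sub>R bubble_basis c x)) = 0" for w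
      using bubble_basis_independent[OF finite_multi_indices that] by blast
  qed (use k finite_Q bubble_basis_in_Bub_sp in auto)
  then show ?thesis unfolding fdim_def by (simp add: card_cartesian_product)
qed

end

lemma matrix_vector_mult_sum_right:
  "(N::real^'n::finite^'m::finite) *v (\<Sum>i\<in>A. f i) = (\<Sum>i\<in>A. N *v f i)"
  by (induction A rule: infinite_finite_induct) (auto simp: matrix_vector_right_distrib)

lemma bgrad_eigenvalues_eq:
  fixes V :: "nat \<Rightarrow> real^'n::finite" and N :: "real^'n^'n"
  assumes nd: "nondeg_simplex V"
    and \<nu>: "\<And>j. j \<in> {0..CARD('n)} \<Longrightarrow> N *v bgrad V j = \<nu> j *\<^sub>R bgrad V j"
    and m: "m \<in> {0..CARD('n)}"
  shows "\<nu> m = \<nu> 0"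
proof -
  have "(\<Sum>j\<in>{0..CARD('n)}. \<nu> j *\<^sub>R bgrad V j) = N *v (\<Sum>j\<in>{0..CARD('n)}. bgrad V j)"
    by (simp add: \<nu> matrix_vector_mult_sum_right)
  also have "\<dots> = 0" using sum_bary_coeffs(1)[OF nd] by simp
  finally have "0 = (\<Sum>j\<in>{0..CARD('n)}. \<nu> j *\<^sub>R bgrad V j) \<bullet> (V m - V 0)" by simp
  also have "\<dots> = (\<Sum>j\<in>{0..CARD('n)}. (if m = j then \<nu> j else 0) - (if j = 0 then \<nu> 0 else 0))"
    by (simp add: inner_sum_left bgrad_inner_edge[OF nd _ m] if_distrib[of "\<lambda>c. _ * c"]
        right_diff_distrib cong: if_cong)
  also have "\<dots> = \<nu> m - \<nu> 0" using m by (simp add: sum_subtractf)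
  finally show ?thesis by simp
qed

lemma trace_free_bgrad_eigenvectors_eq_zero:
  fixes V :: "nat \<Rightarrow> real^'n::finite" and N :: "real^'n^'n"
  assumes nd: "nondeg_simplex V" and tr: "trace N = 0"
    and eigen: "\<And>j. j \<in> {0..CARD('n)} \<Longrightarrow> \<exists>\<nu>. N *v bgrad V j = \<nu> *\<^sub>R bgrad V j"
  shows "N = 0"
proof -
  obtain \<nu> where \<nu>: "\<And>j. j \<in> {0..CARD('n)} \<Longrightarrow> N *v bgrad V j = \<nu> j *\<^sub>R bgrad V j"
    using eigen by metis
  have N_scalar: "N *v e = \<nu> 0 *\<^sub>R e" for e
  proof -
    have "N *v e = (\<Sum>i\<in>{0..CARD('n)}. (e \<bullet> V i) *\<^sub>R (\<nu> i *\<^sub>R bgrad V i))"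
      by (subst bgrad_expansion(1)[OF nd, of e])
        (simp add: matrix_vector_mult_sum_right matrix_vector_mult_scaleR \<nu>)
    also have "\<dots> = (\<Sum>i\<in>{0..CARD('n)}. \<nu> 0 *\<^sub>R ((e \<bullet> V i) *\<^sub>R bgrad V i))"
    proof (intro sum.cong refl)
      fix i assume "i \<in> {0..CARD('n)}"
      then show "(e \<bullet> V i) *\<^sub>R (\<nu> i *\<^sub>R bgrad V i) = \<nu> 0 *\<^sub>R ((e \<bullet> V i) *\<^sub>R bgrad V i)"
        using bgrad_eigenvalues_eq[OF nd \<nu>, of i] by simp
    qed
    also have "\<dots> = \<nu> 0 *\<^sub>R e"
      by (simp only: scaleR_sum_right[symmetric] bgrad_expansion(1)[OF nd, of e, symmetric])
    finally show ?thesis .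
  qed
  have N_entries: "N $ r $ s = (if r = s then \<nu> 0 else 0)" for r s
    using N_scalar[of "axis s 1"] by (simp add: vec_eq_iff matrix_vector_mult_def axis_def if_distrib cong: if_cong)
  have "\<nu> 0 = 0" using tr unfolding trace_def by (simp add: N_entries)
  then show ?thesis by (simp add: vec_eq_iff N_entries)
qed


section \<open>The planar bubble basis\<close>

lemma curl2_inner_self: "curl2 g \<bullet> g = 0"
  unfolding curl2_def by (simp add: inner_vec_def sum_2)

lemma curl2_decomposition: "(g \<bullet> g) *\<^sub>R w = (g \<bullet> w) *\<^sub>R g + (curl2 g \<bullet> w) *\<^sub>R curl2 g"
  unfolding curl2_def by (simp add: vec_eq_iff forall_2 inner_vec_def sum_2 algebra_simps)

lemma curl2_binet: "(curl2 g \<bullet> h) * (curl2 a \<bullet> b) = (g \<bullet> a) * (h \<bullet> b) - (g \<bullet> b) * (h \<bullet> a)"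
  unfolding curl2_def by (simp add: inner_vec_def sum_2 algebra_simps)

lemma vertex_indices_2: "{0..CARD(2)} = {0..2::nat}" "i \<in> {0..2::nat} \<longleftrightarrow> i = 0 \<or> i = 1 \<or> i = 2"
  by auto

lemma curl2_bgrad_nonzero:
  fixes V :: "nat \<Rightarrow> real^2"
  assumes nd: "nondeg_simplex V" and ab: "a \<in> {0..2}" "b \<in> {0..2}" "a \<noteq> b"
  shows "curl2 (bgrad V a) \<bullet> bgrad V b \<noteq> 0"
proof -
  define l where "l = 3 - a - b"
  have l: "l \<in> {0..CARD(2)}" "l \<noteq> a" "l \<noteq> b" using ab unfolding l_def vertex_indices_2 by auto
  have "(curl2 (bgrad V a) \<bullet> bgrad V b) * (curl2 (V a - V l) \<bullet> (V b - V l)) = 1"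
    unfolding curl2_binet using ab l bgrad_inner_edge[OF nd] by simp
  then show ?thesis by auto
qed

lemma bubble_frame_2d:
  fixes V :: "nat \<Rightarrow> real^2"
  assumes nd: "nondeg_simplex V"
  shows "bubble_frame V {0..2} (\<lambda>i. i) (S2 V) (\<lambda>i. curl2 (bgrad V i))"
proof
  have dual: "curl2 (bgrad V p) \<bullet> (S2 V p' *v bgrad V p) =
      (curl2 (bgrad V ((p' + 2) mod 3)) \<bullet> bgrad V p) * (curl2 (bgrad V p) \<bullet> bgrad V ((p' + 1) mod 3))"
    for p p'
    unfolding S2_def by (simp add: inner_dev_outer_mult_vec curl2_inner_self)
  show "nondeg_simplex V" by (rule nd)
  show "p \<in> {0..2} \<Longrightarrow> p \<in> {0..CARD(2)}" for p by simp
  show "trace (S2 V p) = 0" for p unfolding S2_def by (rule trace_dev)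
  show "curl2 (bgrad V p) \<bullet> bgrad V p = 0" for p by (rule curl2_inner_self)
  show "tang_part (S2 V p) n = 0"
    if "p \<in> {0..2}" "j \<in> {0..CARD(2)}" "j \<noteq> p" "unit_normal V j n" for p j n
    unfolding S2_def
  proof (rule tang_part_dev_outer_facet[OF nd that(2,4)])
    show "curl2 (bgrad V ((p + 2) mod 3)) \<bullet> bgrad V j = 0 \<or> bgrad V ((p + 1) mod 3) = bgrad V j"
      using that(1-3) unfolding vertex_indices_2 by (elim disjE; simp add: curl2_inner_self numeral_2_eq_2)
  qed
  show "curl2 (bgrad V p) \<bullet> (S2 V p' *v bgrad V p) = 0"
    if "p \<in> {0..2}" "p' \<in> {0..2}" "p \<noteq> p'" for p p'
    unfolding dual using that unfolding vertex_indices_2 by (elim disjE; simp add: curl2_inner_self numeral_2_eq_2)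
  show "curl2 (bgrad V p) \<bullet> (S2 V p *v bgrad V p) \<noteq> 0" if "p \<in> {0..2}" for p
    unfolding dual using that unfolding vertex_indices_2 by (elim disjE; simp add: curl2_bgrad_nonzero[OF nd])
  show "N = 0" if tr: "trace N = 0"
    and tests: "\<And>p. p \<in> {0..2} \<Longrightarrow> curl2 (bgrad V p) \<bullet> (N *v bgrad V p) = 0" for N
  proof (rule trace_free_bgrad_eigenvectors_eq_zero[OF nd tr])
    fix j assume j: "j \<in> {0..CARD(2)}"
    let ?g = "bgrad V j"
    have dec: "(?g \<bullet> ?g) *\<^sub>R (N *v ?g) = (?g \<bullet> (N *v ?g)) *\<^sub>R ?g"
      using curl2_decomposition[of ?g "N *v ?g"] tests[of j] j by simp
    have "?g \<bullet> ?g \<noteq> 0" using bgrad_nonzero[OF nd j] by simp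
    then have "N *v ?g = inverse (?g \<bullet> ?g) *\<^sub>R ((?g \<bullet> ?g) *\<^sub>R (N *v ?g))" by simp
    then show "\<exists>\<nu>. N *v ?g = \<nu> *\<^sub>R ?g" unfolding dec by auto
  qed
qed (simp_all)


section \<open>The spatial bubble basis\<close>

lemma cross3_reciprocal_basis:
  "(g \<bullet> cross3 a b) *\<^sub>R w = (w \<bullet> cross3 a b) *\<^sub>R g + (w \<bullet> cross3 b g) *\<^sub>R a + (w \<bullet> cross3 g a) *\<^sub>R b"
  unfolding cross3_def by (simp add: vec_eq_iff forall_3 inner_vec_def sum_3 algebra_simps)

lemma cross3_tests_parallel:
  assumes "cross3 g a \<bullet> w = 0" "cross3 g b \<bullet> w = 0" "g \<bullet> cross3 a b \<noteq> 0"
  shows "\<exists>\<nu>. w = \<nu> *\<^sub>R g"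
proof -
  have "cross3 b g = - cross3 g b" by (rule cross_skew)
  then have "(g \<bullet> cross3 a b) *\<^sub>R w = (w \<bullet> cross3 a b) *\<^sub>R g"
    using cross3_reciprocal_basis[of g a b w] assms(1,2) by (simp add: inner_commute)
  then have "w = inverse (g \<bullet> cross3 a b) *\<^sub>R ((w \<bullet> cross3 a b) *\<^sub>R g)"
    using assms(3) by (metis scaleR_scaleR left_inverse scaleR_one)
  then show ?thesis by auto
qed

lemma cross3_binet:
  "(cross3 a b \<bullet> c) * (cross3 x y \<bullet> z) =
    (a \<bullet> x) * ((b \<bullet> y) * (c \<bullet> z) - (b \<bullet> z) * (c \<bullet> y))
    - (a \<bullet> y) * ((b \<bullet> x) * (c \<bullet> z) - (b \<bullet> z) * (c \<bullet> x))
    + (a \<bullet> z) * ((b \<bullet> x) * (c \<bullet> y) - (b \<bullet> y) * (c \<bullet> x))"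
  unfolding cross3_def by (simp add: inner_vec_def sum_3) algebra

lemma vertex_indices_3: "{0..CARD(3)} = {0..3::nat}" "i \<in> {0..3::nat} \<longleftrightarrow> i = 0 \<or> i = 1 \<or> i = 2 \<or> i = 3"
  by auto

lemma cross3_bgrad_nonzero:
  fixes V :: "nat \<Rightarrow> real^3"
  assumes nd: "nondeg_simplex V" and abc: "a \<in> {0..3}" "b \<in> {0..3}" "c \<in> {0..3}"
    and distinct: "a \<noteq> b" "a \<noteq> c" "b \<noteq> c"
  shows "cross3 (bgrad V a) (bgrad V b) \<bullet> bgrad V c \<noteq> 0"
proof -
  define l where "l = 6 - a - b - c"
  have l: "l \<in> {0..CARD(3)}" "l \<noteq> a" "l \<noteq> b" "l \<noteq> c"
    using abc distinct unfolding l_def vertex_indices_3 by auto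
  have "(cross3 (bgrad V a) (bgrad V b) \<bullet> bgrad V c) * (cross3 (V a - V l) (V b - V l) \<bullet> (V c - V l)) = 1"
    unfolding cross3_binet using abc distinct l bgrad_inner_edge[OF nd] by simp
  then show ?thesis by auto
qed

definition S3_test :: "(nat \<Rightarrow> real^3) \<Rightarrow> nat \<times> nat \<Rightarrow> real^3" where
  "S3_test V p = cross3 (bgrad V (snd p)) (bgrad V ((snd p + (if fst p = 0 then 2 else 1)) mod 4))"

lemma S3_test_inner_bgrad: "S3_test V (q, i) \<bullet> bgrad V i = 0"
  unfolding S3_test_def by (simp add: dot_cross_self)

lemma S3_test_S3:
  "S3_test V (q, i) \<bullet> (S3 V q' i' *v bgrad V i) =
     (if q' = 0
      then (cross3 (bgrad V ((i' + 2) mod 4)) (bgrad V ((i' + 3) mod 4)) \<bullet> bgrad V i) *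
           (S3_test V (q, i) \<bullet> bgrad V ((i' + 1) mod 4))
      else (cross3 (bgrad V ((i' + 3) mod 4)) (bgrad V ((i' + 1) mod 4)) \<bullet> bgrad V i) *
           (S3_test V (q, i) \<bullet> bgrad V ((i' + 2) mod 4)))"
  unfolding S3_def by (simp add: inner_dev_outer_mult_vec S3_test_inner_bgrad)

lemma S3_test_S3_offdiag:
  assumes "q \<in> {0..1}" "q' \<in> {0..1}" "i \<in> {0..3}" "i' \<in> {0..3}" "(q, i) \<noteq> (q', i')"
  shows "S3_test V (q, i) \<bullet> (S3 V q' i' *v bgrad V i) = 0"
  unfolding S3_test_S3 unfolding S3_test_def
  using assms unfolding vertex_indices_3
  by (auto simp: dot_cross_self numeral_2_eq_2[symmetric] numeral_3_eq_3[symmetric])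

lemma S3_test_S3_diag:
  fixes V :: "nat \<Rightarrow> real^3"
  assumes nd: "nondeg_simplex V" and "q \<in> {0..1}" "i \<in> {0..3}"
  shows "S3_test V (q, i) \<bullet> (S3 V q i *v bgrad V i) \<noteq> 0"
  unfolding S3_test_S3 unfolding S3_test_def
  using assms(2,3) unfolding vertex_indices_3
  by (auto simp: cross3_bgrad_nonzero[OF nd] numeral_2_eq_2[symmetric] numeral_3_eq_3[symmetric])

lemma S3_tang_part_facet:
  fixes V :: "nat \<Rightarrow> real^3"
  assumes nd: "nondeg_simplex V" and qi: "q \<in> {0..1}" "i \<in> {0..3}"
    and j: "j \<in> {0..CARD(3)}" "j \<noteq> i" and n: "unit_normal V j n"
  shows "tang_part (S3 V q i) n = 0"
proof (cases "q = 0")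
  case True
  have "cross3 (bgrad V ((i + 2) mod 4)) (bgrad V ((i + 3) mod 4)) \<bullet> bgrad V j = 0 \<or>
      bgrad V ((i + 1) mod 4) = bgrad V j"
    using qi(2) j unfolding vertex_indices_3
    by (elim disjE; simp add: dot_cross_self numeral_2_eq_2[symmetric] numeral_3_eq_3[symmetric])
  then show ?thesis unfolding S3_def using True by (simp add: tang_part_dev_outer_facet[OF nd j(1) n])
next
  case False
  have "cross3 (bgrad V ((i + 3) mod 4)) (bgrad V ((i + 1) mod 4)) \<bullet> bgrad V j = 0 \<or>
      bgrad V ((i + 2) mod 4) = bgrad V j"
    using qi(2) j unfolding vertex_indices_3
    by (elim disjE; simp add: dot_cross_self numeral_2_eq_2[symmetric] numeral_3_eq_3[symmetric])
  then show ?thesis unfolding S3_def using False by (simp add: tang_part_dev_outer_facet[OF nd j(1) n])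
qed

lemma bubble_frame_3d:
  fixes V :: "nat \<Rightarrow> real^3"
  assumes nd: "nondeg_simplex V"
  shows "bubble_frame V ({0..1} \<times> {0..3}) snd (\<lambda>(q, i). S3 V q i) (S3_test V)"
proof
  show "nondeg_simplex V" by (rule nd)
  show "p \<in> {0..1} \<times> {0..3} \<Longrightarrow> snd p \<in> {0..CARD(3)}" for p by auto
  show "trace (case p of (q, i) \<Rightarrow> S3 V q i) = 0" for p
    by (cases p) (simp add: S3_def trace_dev)
  show "S3_test V p \<bullet> bgrad V (snd p) = 0" for p
    by (cases p) (simp add: S3_test_inner_bgrad)
  show "tang_part (case p of (q, i) \<Rightarrow> S3 V q i) n = 0"
    if "p \<in> {0..1} \<times> {0..3}" "j \<in> {0..CARD(3)}" "j \<noteq> snd p" "unit_normal V j n" for p j n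
    using that S3_tang_part_facet[OF nd] by (cases p) auto
  show "S3_test V p \<bullet> ((case p' of (q, i) \<Rightarrow> S3 V q i) *v bgrad V (snd p)) = 0"
    if "p \<in> {0..1} \<times> {0..3}" "p' \<in> {0..1} \<times> {0..3}" "p \<noteq> p'" for p p'
    using that by (cases p, cases p') (auto intro!: S3_test_S3_offdiag)
  show "S3_test V p \<bullet> ((case p of (q, i) \<Rightarrow> S3 V q i) *v bgrad V (snd p)) \<noteq> 0"
    if "p \<in> {0..1} \<times> {0..3}" for p
    using that S3_test_S3_diag[OF nd] by (cases p) simp
  show "N = 0" if tr: "trace N = 0"
    and tests: "\<And>p. p \<in> {0..1} \<times> {0..3} \<Longrightarrow> S3_test V p \<bullet> (N *v bgrad V (snd p)) = 0" for N
  proof (rule trace_free_bgrad_eigenvectors_eq_zero[OF nd tr])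
    fix j assume j: "j \<in> {0..CARD(3)}"
    show "\<exists>\<nu>. N *v bgrad V j = \<nu> *\<^sub>R bgrad V j"
    proof (rule cross3_tests_parallel)
      show "cross3 (bgrad V j) (bgrad V ((j + 2) mod 4)) \<bullet> (N *v bgrad V j) = 0"
        using tests[of "(0, j)"] j by (simp add: S3_test_def)
      show "cross3 (bgrad V j) (bgrad V ((j + 1) mod 4)) \<bullet> (N *v bgrad V j) = 0"
        using tests[of "(1, j)"] j by (simp add: S3_test_def)
      show "bgrad V j \<bullet> cross3 (bgrad V ((j + 2) mod 4)) (bgrad V ((j + 1) mod 4)) \<noteq> 0"
        using j unfolding vertex_indices_3
        by (auto simp: inner_commute[of "bgrad V j"] cross3_bgrad_nonzero[OF nd] numeral_2_eq_2[symmetric] numeral_3_eq_3[symmetric])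
    qed
  qed
qed simp


section \<open>Dimension count\<close>

lemma card_nat_lists_sum_le:
  assumes "d \<ge> 1"
  shows "card {l::nat list. length l = d \<and> sum_list l \<le> m} = (m + d) choose d"
proof -
  let ?L = "\<lambda>s. {l::nat list. length l = d \<and> sum_list l = s}"
  have card_L: "card (?L s) = (d - 1 + s) choose s" for s
    using card_length_sum_list[of d s] assms by (simp add: add.commute)
  then have "card (?L s) \<noteq> 0" for s by simp
  then have fin: "finite (?L s)" for s by (meson card.infinite)
  have levels: "{l. length l = d \<and> sum_list l \<le> m} = (\<Union>s\<le>m. ?L s)" by auto
  have "card {l. length l = d \<and> sum_list l \<le> m} = (\<Sum>s\<le>m. card (?L s))"
    unfolding levels by (rule card_UN_disjoint) (auto simp: fin)
  also have "\<dots> = Suc (d - 1 + m) choose m" unfolding card_L by (rule sum_choose_lower)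
  also have "\<dots> = (m + d) choose d"
    using assms binomial_symmetric[of m "m + d"] by (simp add: add.commute)
  finally show ?thesis .
qed

lemma card_multi_indices:
  "card (multi_indices m :: ('n::finite \<Rightarrow> nat) set) = (m + CARD('n)) choose CARD('n)"
proof -
  let ?d = "CARD('n)"
  obtain h where h: "bij_betw h {0..<?d} (UNIV :: 'n set)"
    using ex_bij_betw_nat_finite[of "UNIV :: 'n set"] by auto
  define enc where "enc \<alpha> = map (\<alpha> \<circ> h) [0..<?d]" for \<alpha> :: "'n \<Rightarrow> nat"
  define dec where "dec l = (\<lambda>x. l ! inv_into {0..<?d} h x)" for l :: "nat list"
  have inv_h: "inv_into {0..<?d} h x < ?d" "h (inv_into {0..<?d} h x) = x" for x
    using bij_betw_inv_into_right[OF h] bij_betw_apply[OF bij_betw_inv_into[OF h]] by auto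
  have sum_enc: "sum_list (enc \<alpha>) = sum \<alpha> UNIV" for \<alpha>
    unfolding enc_def sum_set_upt_conv_sum_list_nat[symmetric]
    using sum.reindex_bij_betw[OF h, of \<alpha>] by (simp add: atLeast0LessThan)
  have "bij_betw enc (multi_indices m) {l. length l = ?d \<and> sum_list l \<le> m}"
  proof (rule bij_betw_byWitness[where f' = dec])
    show "\<forall>\<alpha>\<in>multi_indices m. dec (enc \<alpha>) = \<alpha>"
      by (auto simp: dec_def enc_def inv_h)
    show "\<forall>l\<in>{l. length l = ?d \<and> sum_list l \<le> m}. enc (dec l) = l"
      by (auto simp: dec_def enc_def intro!: nth_equalityI)
        (metis atLeastLessThan_iff bij_betw_inv_into_left[OF h] zero_le)
    show "enc ` multi_indices m \<subseteq> {l. length l = ?d \<and> sum_list l \<le> m}"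
      by (auto simp: sum_enc multi_indices_def) (simp add: enc_def)
    have "enc (dec l) = l" if "length l = ?d" for l
      using that by (auto simp: dec_def enc_def intro!: nth_equalityI)
        (metis atLeastLessThan_iff bij_betw_inv_into_left[OF h] zero_le)
    then show "dec ` {l. length l = ?d \<and> sum_list l \<le> m} \<subseteq> multi_indices m"
      by (auto simp: multi_indices_def sum_enc[symmetric])
  qed
  from bij_betw_same_card[OF this] show ?thesis
    using card_nat_lists_sum_le[of ?d m] finite_UNIV_card_ge_0[where 'a='n] by simp
qed

lemma real_plus_2_choose_2: "real ((j + 2) choose 2) = (real j + 1) * (real j + 2) / 2"
proof -
  have "real ((j + 2) choose 2) = fact (j + 2) / (fact 2 * fact j)" by (subst binomial_fact) simp_all
  also have "\<dots> = (real j + 1) * (real j + 2) / 2" by (simp add: numeral_2_eq_2 field_simps)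
  finally show ?thesis .
qed

lemma real_plus_3_choose_3: "real ((j + 3) choose 3) = (real j + 1) * (real j + 2) * (real j + 3) / 6"
proof -
  have "real ((j + 3) choose 3) = fact (j + 3) / (fact 3 * fact j)" by (subst binomial_fact) simp_all
  also have "\<dots> = (real j + 1) * (real j + 2) * (real j + 3) / 6"
    by (simp add: numeral_3_eq_3 numeral_2_eq_2 field_simps)
  finally show ?thesis .
qed

lemma Bub_sp_2d:
  fixes V :: "nat \<Rightarrow> real^2"
  assumes nd: "nondeg_simplex V" and k: "k \<ge> 1"
  shows "(\<forall>b\<in>Bub_sp k V. \<exists>\<mu> :: nat \<Rightarrow> real^2 \<Rightarrow> real.
            (\<forall>i\<in>{0..2}. poly_fun (k - 1) (\<mu> i)) \<and>
            b = (\<lambda>x. \<Sum>i\<in>{0..2}. (\<mu> i x * bary V i x) *\<^sub>R S2 V i)) \<and>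
         real (fdim (Bub_sp k V)) = 3 / 2 * real k * (real k + 1)"
proof (intro conjI ballI)
  interpret bubble_frame V "{0..2}" "\<lambda>i. i" "S2 V" "\<lambda>i. curl2 (bgrad V i)"
    by (rule bubble_frame_2d[OF nd])
  fix b assume "b \<in> Bub_sp k V"
  then obtain \<mu> where
    "\<And>i. i \<in> {0..2} \<Longrightarrow> poly_fun (k - 1) (\<mu> i)"
    "b = (\<lambda>x. \<Sum>i\<in>{0..2}. (\<mu> i x * bary V i x) *\<^sub>R S2 V i)"
    using Bub_sp_decomposition[OF k] by blast
  then show "\<exists>\<mu>. (\<forall>i\<in>{0..2}. poly_fun (k - 1) (\<mu> i)) \<and>
      b = (\<lambda>x. \<Sum>i\<in>{0..2}. (\<mu> i x * bary V i x) *\<^sub>R S2 V i)" by blast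
next
  interpret bubble_frame V "{0..2}" "\<lambda>i. i" "S2 V" "\<lambda>i. curl2 (bgrad V i)"
    by (rule bubble_frame_2d[OF nd])
  obtain j where j: "k = Suc j" using k by (cases k) auto
  have "real (fdim (Bub_sp k V)) = 3 * real ((j + 2) choose 2)"
    unfolding fdim_Bub_sp[OF k] card_multi_indices by (simp add: j)
  also have "\<dots> = 3 / 2 * real k * (real k + 1)"
    unfolding real_plus_2_choose_2 j by (simp add: algebra_simps)
  finally show "real (fdim (Bub_sp k V)) = 3 / 2 * real k * (real k + 1)" .
qed

lemma Bub_sp_3d:
  fixes V :: "nat \<Rightarrow> real^3"
  assumes nd: "nondeg_simplex V" and k: "k \<ge> 1"
  shows "(\<forall>b\<in>Bub_sp k V. \<exists>\<mu> :: nat \<Rightarrow> nat \<Rightarrow> real^3 \<Rightarrow> real.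
            (\<forall>q\<in>{0..1}. \<forall>i\<in>{0..3}. poly_fun (k - 1) (\<mu> q i)) \<and>
            b = (\<lambda>x. \<Sum>q\<in>{0..1}. \<Sum>i\<in>{0..3}. (\<mu> q i x * bary V i x) *\<^sub>R S3 V q i)) \<and>
         real (fdim (Bub_sp k V)) = 8 / 6 * real k * (real k + 1) * (real k + 2)"
proof (intro conjI ballI)
  interpret bubble_frame V "{0..1} \<times> {0..3}" snd "\<lambda>(q, i). S3 V q i" "S3_test V"
    by (rule bubble_frame_3d[OF nd])
  fix b assume "b \<in> Bub_sp k V"
  then obtain \<mu> where \<mu>: "\<And>p. p \<in> {0..1} \<times> {0..3} \<Longrightarrow> poly_fun (k - 1) (\<mu> p)"
    "b = (\<lambda>x. \<Sum>p\<in>{0..1} \<times> {0..3}. (\<mu> p x * bary V (snd p) x) *\<^sub>R (case p of (q, i) \<Rightarrow> S3 V q i))"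
    using Bub_sp_decomposition[OF k] by blast
  show "\<exists>\<mu>. (\<forall>q\<in>{0..1}. \<forall>i\<in>{0..3}. poly_fun (k - 1) (\<mu> q i)) \<and>
      b = (\<lambda>x. \<Sum>q\<in>{0..1}. \<Sum>i\<in>{0..3}. (\<mu> q i x * bary V i x) *\<^sub>R S3 V q i)"
  proof (intro exI conjI)
    show "\<forall>q\<in>{0..1}. \<forall>i\<in>{0..3}. poly_fun (k - 1) (\<mu> (q, i))" using \<mu>(1) by auto
    show "b = (\<lambda>x. \<Sum>q\<in>{0..1}. \<Sum>i\<in>{0..3}. (\<mu> (q, i) x * bary V i x) *\<^sub>R S3 V q i)"
      unfolding \<mu>(2) by (simp add: sum.cartesian_product split_def)
  qed
next
  interpret bubble_frame V "{0..1} \<times> {0..3}" snd "\<lambda>(q, i). S3 V q i" "S3_test V"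
    by (rule bubble_frame_3d[OF nd])
  obtain j where j: "k = Suc j" using k by (cases k) auto
  have "real (fdim (Bub_sp k V)) = 8 * real ((j + 3) choose 3)"
    unfolding fdim_Bub_sp[OF k] card_multi_indices by (simp add: j)
  also have "\<dots> = 8 / 6 * real k * (real k + 1) * (real k + 2)"
    unfolding real_plus_3_choose_3 j by (simp add: algebra_simps)
  finally show "real (fdim (Bub_sp k V)) = 8 / 6 * real k * (real k + 1) * (real k + 2)" .
qed

theorem lemma5p2:
  fixes k :: nat
  assumes "k \<ge> 1"
  shows "(\<forall>V :: nat \<Rightarrow> real^2. nondeg_simplex V \<longrightarrow>
            (\<forall>b\<in>Bub_sp k V. \<exists>\<mu> :: nat \<Rightarrow> real^2 \<Rightarrow> real.
                (\<forall>i\<in>{0..2}. poly_fun (k - 1) (\<mu> i)) \<and>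
                b = (\<lambda>x. \<Sum>i\<in>{0..2}. (\<mu> i x * bary V i x) *\<^sub>R S2 V i)) \<and>
            real (fdim (Bub_sp k V)) = 3 / 2 * real k * (real k + 1))
       \<and> (\<forall>V :: nat \<Rightarrow> real^3. nondeg_simplex V \<longrightarrow>
            (\<forall>b\<in>Bub_sp k V. \<exists>\<mu> :: nat \<Rightarrow> nat \<Rightarrow> real^3 \<Rightarrow> real.
                (\<forall>q\<in>{0..1}. \<forall>i\<in>{0..3}. poly_fun (k - 1) (\<mu> q i)) \<and>
                b = (\<lambda>x. \<Sum>q\<in>{0..1}. \<Sum>i\<in>{0..3}. (\<mu> q i x * bary V i x) *\<^sub>R S3 V q i)) \<and>
            real (fdim (Bub_sp k V)) = 8 / 6 * real k * (real k + 1) * (real k + 2))"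
  using Bub_sp_2d Bub_sp_3d assms by blast

end
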